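(* Let $s>1/2$. For $\tau\in\mathbb{R}$ let $\mathcal H_1(\tau)$ be the linear operator on $2\pi$-periodic functions defined by $\mathcal H_1(\tau)e_n=e^{-in^3\tau}e_n$, $n\in\mathbb Z$, and for $w\in H^s$ set $$F(\tau,w):=\mathcal H_1(-\tau)\big(\mathcal H_1(\tau)w\cdot|\mathcal H_1(\tau)w|^2\big).$$ Then for every fixed $\tau$ the map $w\mapsto F(\tau,w)$ is a bounded smooth map from $H^s$ to itself with $$\|F(\tau,w)\|_{H^s}\le C_s\|w\|_{H^s}^3,$$ where $C_s$ does not depend on $\tau$. Moreover, $F$ is $2\pi$-periodic in $\tau$ and its time average $\frac1{2\pi}\int_0^{2\pi}F(\tau,w)\,d\tau=:N(w)$ is given by $$N(w)=2w\|w\|_{H}^2+\bar w\, [w,w]-2 w_0|w_0|^2e_0-\sum_{n\ne0}w_n(|w_n|^2+2|w_{-n}|^2)e_n,$$ equivalently $$N(w)=\Big(2w_0(\|w\|^2_H-|w_0|^2)+\bar w_0[w,w]\Big)e_0+\sum_{n\ne0}\Big(w_n(2\|w\|^2_H-|w_n|^2-2|w_{-n}|^2)+\bar w_{-n}[w,w]\Big)e_n.$$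
   Context: $e_n(x)=e^{inx}$, $n\in\mathbb Z$. $H=L^2_{per}(-\pi,\pi)$ is the space of complex-valued $2\pi$-periodic square-integrable functions; every $v$ is written $v=\sum_{n\in\mathbb Z}v_ne_n$, with $\|v\|_H^2=\sum_n|v_n|^2$ and $\|v\|_{H^s}^2=\sum_n(|n|^2+1)^s|v_n|^2$ ($H^s$ the periodic Sobolev space). For $w=\sum w_ne_n$, $v=\sum v_ne_n$, $[w,v]:=\sum_{n\in\mathbb Z}w_nv_{-n}$, and $\bar w$ is the complex conjugate function, $\bar w=\sum_n \bar w_{-n}e_n$. *)

theory Defs
  imports "HOL-Analysis.Analysis"
begin

text \<open>A 2pi-periodic function v is represented by its Fourier coefficient sequence
  (v_n), n in Z, i.e. v = sum_n v_n e_n.\<close>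

type_synonym fseq = "int \<Rightarrow> complex"

definition Hs_weight :: "real \<Rightarrow> int \<Rightarrow> real" where
  "Hs_weight s n = ((real_of_int \<bar>n\<bar>)^2 + 1) powr s"

definition Hs :: "real \<Rightarrow> fseq set" where
  "Hs s = {v. (\<lambda>n. Hs_weight s n * (cmod (v n))^2) summable_on UNIV}"

definition Hs_norm :: "real \<Rightarrow> fseq \<Rightarrow> real" where
  "Hs_norm s v = sqrt (\<Sum>\<^sub>\<infinity>n\<in>UNIV. Hs_weight s n * (cmod (v n))^2)"

definition H_norm2 :: "fseq \<Rightarrow> real" where
  "H_norm2 v = (\<Sum>\<^sub>\<infinity>n\<in>UNIV. (cmod (v n))^2)"

definition bracket :: "fseq \<Rightarrow> fseq \<Rightarrow> complex" where
  "bracket w v = (\<Sum>\<^sub>\<infinity>n\<in>UNIV. w n * v (- n))"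

text \<open>Fourier coefficients of the pointwise product of two functions (convolution)\<close>
definition fmult :: "fseq \<Rightarrow> fseq \<Rightarrow> fseq" where
  "fmult u v = (\<lambda>n. \<Sum>\<^sub>\<infinity>m\<in>UNIV. u m * v (n - m))"

text \<open>complex conjugate function: conj w = sum_n cnj(w_{-n}) e_n\<close>
definition fconj :: "fseq \<Rightarrow> fseq" where
  "fconj w = (\<lambda>n. cnj (w (- n)))"

definition fadd :: "fseq \<Rightarrow> fseq \<Rightarrow> fseq" where
  "fadd u v = (\<lambda>n. u n + v n)"

definition fdiff :: "fseq \<Rightarrow> fseq \<Rightarrow> fseq" where
  "fdiff u v = (\<lambda>n. u n - v n)"

definition fscale :: "real \<Rightarrow> fseq \<Rightarrow> fseq" where
  "fscale a u = (\<lambda>n. complex_of_real a * u n)"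

definition H1 :: "real \<Rightarrow> fseq \<Rightarrow> fseq" where
  "H1 \<tau> w = (\<lambda>n. exp (- \<i> * of_int (n^3) * of_real \<tau>) * w n)"

text \<open>F(tau,w) = H_1(-tau)(H_1(tau)w * |H_1(tau)w|^2), with |u|^2 = u * conj u\<close>
definition Fnl :: "real \<Rightarrow> fseq \<Rightarrow> fseq" where
  "Fnl \<tau> w = (let u = H1 \<tau> w in H1 (- \<tau>) (fmult u (fmult u (fconj u))))"

definition Navg :: "fseq \<Rightarrow> fseq" where
  "Navg w = (\<lambda>n. integral {0..2*pi} (\<lambda>\<tau>. Fnl \<tau> w n) / complex_of_real (2*pi))"

definition multilin_bounded :: "real \<Rightarrow> nat \<Rightarrow> (fseq list \<Rightarrow> fseq) \<Rightarrow> bool" where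
  "multilin_bounded s k T \<longleftrightarrow>
     (\<forall>hs. length hs = k \<and> set hs \<subseteq> Hs s \<longrightarrow> T hs \<in> Hs s) \<and>
     (\<forall>i<k. \<forall>hs x y a. length hs = k \<and> set hs \<subseteq> Hs s \<and> x \<in> Hs s \<and> y \<in> Hs s \<longrightarrow>
         T (hs[i := fadd x y]) = fadd (T (hs[i := x])) (T (hs[i := y])) \<and>
         T (hs[i := fscale a x]) = fscale a (T (hs[i := x]))) \<and>
     (\<exists>C. \<forall>hs. length hs = k \<and> set hs \<subseteq> Hs s \<longrightarrow>
         Hs_norm s (T hs) \<le> C * prod_list (map (Hs_norm s) hs))"

text \<open>(Real-Frechet) C^infinity maps H^s \<rightarrow> H^s: there are bounded multilinear maps D k w
  (the k-th derivative at w) such that D 0 w [] = G w and D (k+1) w is the Frechet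
  derivative of w \<mapsto> D k w, uniformly w.r.t. the multilinear operator norm.\<close>
definition smooth_Hs :: "real \<Rightarrow> (fseq \<Rightarrow> fseq) \<Rightarrow> bool" where
  "smooth_Hs s G \<longleftrightarrow>
     (\<exists>D :: nat \<Rightarrow> fseq \<Rightarrow> fseq list \<Rightarrow> fseq.
        (\<forall>w\<in>Hs s. D 0 w [] = G w) \<and>
        (\<forall>k. \<forall>w\<in>Hs s. multilin_bounded s k (D k w)) \<and>
        (\<forall>k. \<forall>w\<in>Hs s. \<forall>\<epsilon>>0. \<exists>\<delta>>0. \<forall>h\<in>Hs s. Hs_norm s h < \<delta> \<longrightarrow>
           (\<forall>hs. length hs = k \<and> set hs \<subseteq> Hs s \<longrightarrow>
              Hs_norm s (fdiff (fdiff (D k (fadd w h) hs) (D k w hs)) (D (Suc k) w (h # hs)))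
                \<le> \<epsilon> * Hs_norm s h * prod_list (map (Hs_norm s) hs))))"

end

theory Submission
  imports Defs "HOL-Analysis.Kronecker_Approximation_Theorem"
begin

text \<open>
  For \<open>s > 1/2\<close> the space \<open>H\<^sup>s\<close> is an algebra: Peetre's inequality
  \<open>\<langle>n\<rangle>\<^sup>2\<^sup>s \<le> 4\<^sup>s (\<langle>m\<rangle>\<^sup>2\<^sup>s + \<langle>n - m\<rangle>\<^sup>2\<^sup>s)\<close>, Cauchy--Schwarz and the summability of
  \<open>\<langle>n\<rangle>\<^sup>-\<^sup>2\<^sup>s\<close> bound the convolution of Fourier coefficients. Since \<open>H\<^sub>1(\<tau>)\<close> and
  conjugation are isometries, \<open>F(\<tau>, \<cdot>)\<close> is the diagonal of a trilinear form bounded uniformly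
  in \<open>\<tau>\<close>; a cubic map of this kind is smooth because its Taylor expansion terminates.
  Periodicity holds because the exponents \<open>n\<^sup>3\<close> are integers.

  For the average, \<open>F(\<tau>, w)\<^sub>n\<close> is an absolutely convergent sum over pairs \<open>(m, k)\<close> of
  \<open>w\<^sub>m w\<^sub>k w\<^sub>m\<^sub>+\<^sub>k\<^sub>-\<^sub>n\<close> (the last one conjugated) times \<open>e\<^sup>i\<^sup>\<tau>\<^sup>\<phi>\<close>,
  with phase \<open>\<phi> = n\<^sup>3 - m\<^sup>3 - k\<^sup>3 - (n - m - k)\<^sup>3 = 3(m + k)(n - m)(n - k)\<close>.
  Integrating term by term keeps exactly the resonant pairs, the union of the lines
  \<open>k = -m\<close>, \<open>m = n\<close> and \<open>k = n\<close>; the line \<open>k = -m\<close> produces \<open>[w, w]\<close>, the other two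
  produce \<open>\<parallel>w\<parallel>\<^sub>H\<^sup>2\<close> each, and inclusion--exclusion removes the doubly counted corners.
\<close>

section \<open>Sobolev weights\<close>

lemma Hs_weight_pos: "Hs_weight s n > 0"
proof -
  have "(real_of_int \<bar>n\<bar>)^2 + 1 > 0"
    by (simp add: add_nonneg_pos)
  then show ?thesis unfolding Hs_weight_def by simp
qed

lemma Hs_weight_nonneg [simp]: "Hs_weight s n \<ge> 0"
  using Hs_weight_pos less_imp_le by blast

lemma Hs_weight_ge_1: "s \<ge> 0 \<Longrightarrow> Hs_weight s n \<ge> 1"
  unfolding Hs_weight_def by (simp add: ge_one_powr_ge_zero)

lemma Hs_weight_uminus [simp]: "Hs_weight s (- n) = Hs_weight s n"
  unfolding Hs_weight_def by simp

lemma Hs_weight_le_sum: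
  assumes "s \<ge> 0"
  shows "Hs_weight s n \<le> 4 powr s * (Hs_weight s m + Hs_weight s (n - m))"
proof -
  define a where "a = (real_of_int \<bar>m\<bar>)^2 + 1"
  define b where "b = (real_of_int \<bar>n - m\<bar>)^2 + 1"
  define c where "c = (real_of_int \<bar>n\<bar>)^2 + 1"
  have ab: "a \<ge> 1" "b \<ge> 1" unfolding a_def b_def by auto
  have "(real_of_int n)^2 \<le> 2 * (real_of_int m)^2 + 2 * (real_of_int (n - m))^2"
    using zero_le_power2[of "real_of_int m - real_of_int (n - m)"]
    by (simp add: power2_eq_square algebra_simps)
  then have "c \<le> 4 * max a b"
    unfolding a_def b_def c_def by (simp add: max_def)
  then have "c powr s \<le> (4 * max a b) powr s"
    using ab assms by (intro powr_mono2) (auto simp: c_def)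
  also have "\<dots> = 4 powr s * max a b powr s"
    using ab by (simp add: powr_mult)
  also have "\<dots> \<le> 4 powr s * (a powr s + b powr s)"
    by (intro mult_left_mono) (auto simp: max_def)
  finally show ?thesis unfolding Hs_weight_def a_def b_def c_def .
qed

lemma summable_inverse_Hs_weight_nat:
  assumes "s > 1/2"
  shows "summable (\<lambda>k::nat. 1 / Hs_weight s (int k))"
proof -
  have "summable (\<lambda>k::nat. real k powr (- (2 * s)))"
    using assms by (simp add: summable_real_powr_iff)
  then show ?thesis
  proof (rule summable_comparison_test'[where N=1])
    fix k :: nat assume "k \<ge> 1"
    then have "real k \<ge> 1" by simp
    have "norm (1 / Hs_weight s (int k)) = ((real k)^2 + 1) powr (- s)"
      unfolding Hs_weight_def by (simp add: powr_minus divide_inverse)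
    also have "\<dots> \<le> ((real k)^2) powr (- s)"
      using \<open>real k \<ge> 1\<close> assms by (intro powr_mono2') auto
    also have "\<dots> = real k powr (- (2 * s))"
      using powr_powr[of "real k" 2 "- s"] by simp
    finally show "norm (1 / Hs_weight s (int k)) \<le> real k powr (- (2 * s))" .
  qed
qed

lemma summable_inverse_Hs_weight:
  assumes "s > 1/2"
  shows "(\<lambda>n. 1 / Hs_weight s n) summable_on UNIV"
proof -
  have nat: "(\<lambda>k::nat. 1 / Hs_weight s (int k)) summable_on UNIV"
    using summable_inverse_Hs_weight_nat[OF assms]
    by (intro summable_nonneg_imp_summable_on) simp_all
  have pos: "(\<lambda>n. 1 / Hs_weight s n) summable_on range int"
    using nat by (subst summable_on_reindex) (auto simp: o_def)
  have neg: "(\<lambda>n. 1 / Hs_weight s n) summable_on range (\<lambda>k. - int k)"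
    using nat by (subst summable_on_reindex) (auto simp: o_def inj_def)
  have "x \<in> range int \<union> range (\<lambda>k. - int k)" for x :: int
    by (cases "x \<ge> 0") (auto intro: range_eqI[where x="nat x"] range_eqI[where x="nat (- x)"])
  then have "UNIV = range int \<union> range (\<lambda>k. - int k)"
    by blast
  then show ?thesis
    using summable_on_union[OF pos neg] by simp
qed


section \<open>Unordered sums over the integers\<close>

lemma Cauchy_Schwarz_infsum:
  fixes a b :: "'x \<Rightarrow> real"
  assumes nonneg: "\<And>i. i \<in> A \<Longrightarrow> a i \<ge> 0" "\<And>i. i \<in> A \<Longrightarrow> b i \<ge> 0"
    and a2: "(\<lambda>i. (a i)^2) summable_on A" and b2: "(\<lambda>i. (b i)^2) summable_on A"
  shows "(\<lambda>i. a i * b i) summable_on A"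
    and "(\<Sum>\<^sub>\<infinity>i\<in>A. a i * b i)^2 \<le> (\<Sum>\<^sub>\<infinity>i\<in>A. (a i)^2) * (\<Sum>\<^sub>\<infinity>i\<in>A. (b i)^2)"
proof -
  define SA where "SA = (\<Sum>\<^sub>\<infinity>i\<in>A. (a i)^2)"
  define SB where "SB = (\<Sum>\<^sub>\<infinity>i\<in>A. (b i)^2)"
  have SA: "SA \<ge> 0" and SB: "SB \<ge> 0"
    unfolding SA_def SB_def by (auto intro: infsum_nonneg)
  show ab: "(\<lambda>i. a i * b i) summable_on A"
  proof (rule summable_on_comparison_test[OF summable_on_add[OF a2 b2]])
    fix i assume "i \<in> A"
    show "a i * b i \<le> (a i)^2 + (b i)^2"
      using zero_le_power2[of "a i - b i"] mult_nonneg_nonneg[OF nonneg[OF \<open>i \<in> A\<close>]]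
      by (simp add: power2_diff)
  qed (use nonneg in auto)
  have "(\<Sum>\<^sub>\<infinity>i\<in>A. a i * b i) \<le> sqrt SA * sqrt SB"
  proof (rule infsum_le_finite_sums[OF ab])
    fix F assume F: "finite F" "F \<subseteq> A"
    have "(\<Sum>i\<in>F. a i * b i) = (\<Sum>i\<in>F. \<bar>a i\<bar> * \<bar>b i\<bar>)"
      using F nonneg by (intro sum.cong) auto
    also have "\<dots> \<le> L2_set a F * L2_set b F"
      by (rule L2_set_mult_ineq)
    also have "\<dots> \<le> sqrt SA * sqrt SB"
      unfolding L2_set_def SA_def SB_def using F
      by (intro mult_mono real_sqrt_le_mono finite_sum_le_infsum a2 b2)
        (auto intro: infsum_nonneg sum_nonneg)
    finally show "(\<Sum>i\<in>F. a i * b i) \<le> sqrt SA * sqrt SB" .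
  qed
  moreover have "0 \<le> (\<Sum>\<^sub>\<infinity>i\<in>A. a i * b i)"
    using nonneg by (intro infsum_nonneg) auto
  ultimately have "(\<Sum>\<^sub>\<infinity>i\<in>A. a i * b i)^2 \<le> (sqrt SA * sqrt SB)^2"
    by (intro power_mono)
  then show "(\<Sum>\<^sub>\<infinity>i\<in>A. a i * b i)^2 \<le> SA * SB"
    using SA SB by (simp add: power_mult_distrib)
qed

lemma bij_int_reflect: "bij_betw (\<lambda>m::int. k - m) UNIV UNIV"
  by (rule bij_betwI[where g="\<lambda>m. k - m"]) auto

lemma bij_int_translate: "bij_betw (\<lambda>m::int. m + k) UNIV UNIV"
  by (rule bij_betwI[where g="\<lambda>m. m - k"]) auto

lemma has_sum_int_reflect:
  "(f has_sum a) UNIV \<Longrightarrow> ((\<lambda>m::int. f (k - m)) has_sum a) UNIV"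
  using has_sum_reindex_bij_betw[OF bij_int_reflect, of f k a] by simp

lemma infsum_int_reflect: "(\<Sum>\<^sub>\<infinity>m::int. f (k - m)) = (\<Sum>\<^sub>\<infinity>m. f m)"
  using infsum_reindex_bij_betw[OF bij_int_reflect, of f k] by simp

lemma has_sum_int_translate:
  "(f has_sum a) UNIV \<Longrightarrow> ((\<lambda>m::int. f (m + k)) has_sum a) UNIV"
  using has_sum_reindex_bij_betw[OF bij_int_translate, of f k a] by simp

lemma has_sum_delta: "((\<lambda>x. if x = a then f x else 0) has_sum f a) UNIV"
  by (rule has_sum_finite_neutralI[of "{a}"]) auto

lemma infsum_delta: "(\<Sum>\<^sub>\<infinity>x. if x = a then f x else 0) = f a"
  using has_sum_delta by (rule infsumI)

lemma has_sum_diff: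
  fixes f g :: "'a \<Rightarrow> 'b::topological_ab_group_add"
  assumes "(f has_sum a) A" "(g has_sum b) A"
  shows "((\<lambda>x. f x - g x) has_sum (a - b)) A"
proof -
  have "((\<lambda>x. - g x) has_sum - b) A"
    using assms(2) by (simp add: has_sum_uminus)
  from has_sum_add[OF assms(1) this] show ?thesis by simp
qed

lemma summable_on_restrict_of_norm:
  fixes c :: "'a \<Rightarrow> 'b::banach"
  assumes "(\<lambda>p. norm (c p)) summable_on UNIV"
  shows "(\<lambda>p. if P p then c p else 0) summable_on UNIV"
proof -
  have "(\<lambda>p. norm (if P p then c p else 0)) summable_on UNIV"
    by (rule summable_on_comparison_test[OF assms]) auto
  then show ?thesis
    by (rule abs_summable_summable)
qed

section \<open>The spaces \<open>H\<^sup>s\<close>\<close>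

definition Hs_norm2 :: "real \<Rightarrow> fseq \<Rightarrow> real" where
  "Hs_norm2 s v = (\<Sum>\<^sub>\<infinity>n. Hs_weight s n * (cmod (v n))^2)"

definition l2 :: "fseq \<Rightarrow> bool" where
  "l2 v \<longleftrightarrow> (\<lambda>n. (cmod (v n))^2) summable_on UNIV"

definition fzero :: fseq where
  "fzero = (\<lambda>n. 0)"

lemma Hs_norm_eq_sqrt: "Hs_norm s v = sqrt (Hs_norm2 s v)"
  by (simp add: Hs_norm_def Hs_norm2_def)

lemma Hs_norm2_nonneg: "Hs_norm2 s v \<ge> 0"
  unfolding Hs_norm2_def by (intro infsum_nonneg) simp

lemma Hs_norm_nonneg: "Hs_norm s v \<ge> 0"
  by (simp add: Hs_norm_eq_sqrt Hs_norm2_nonneg)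

lemma Hs_weighted_le_Hs_norm2:
  assumes "v \<in> Hs s"
  shows "Hs_weight s n * (cmod (v n))^2 \<le> Hs_norm2 s v"
  using finite_sum_le_infsum[of "\<lambda>n. Hs_weight s n * (cmod (v n))^2" UNIV "{n}"] assms
  by (simp add: Hs_def Hs_norm2_def)

lemma Hs_imp_l2:
  assumes "s \<ge> 0" "v \<in> Hs s"
  shows "l2 v"
  unfolding l2_def
proof (rule summable_on_comparison_test)
  show "(\<lambda>n. Hs_weight s n * (cmod (v n))^2) summable_on UNIV"
    using assms(2) by (simp add: Hs_def)
  show "(cmod (v n))^2 \<le> Hs_weight s n * (cmod (v n))^2" for n
    using Hs_weight_ge_1[OF assms(1), of n] by (simp add: mult_le_cancel_right1)
qed simp

lemma L2_set_weighted_le_Hs_norm: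
  assumes "v \<in> Hs s" "finite F"
  shows "L2_set (\<lambda>n. sqrt (Hs_weight s n) * cmod (v n)) F \<le> Hs_norm s v"
proof -
  have "(\<Sum>n\<in>F. (sqrt (Hs_weight s n) * cmod (v n))^2) = (\<Sum>n\<in>F. Hs_weight s n * (cmod (v n))^2)"
    by (simp add: power_mult_distrib)
  also have "\<dots> \<le> Hs_norm2 s v"
    unfolding Hs_norm2_def using assms by (intro finite_sum_le_infsum) (simp_all add: Hs_def)
  finally show ?thesis
    unfolding L2_set_def Hs_norm_eq_sqrt by (rule real_sqrt_le_mono)
qed

lemma Hs_fadd:
  assumes "x \<in> Hs s" "y \<in> Hs s"
  shows "fadd x y \<in> Hs s"
proof -
  have "(\<lambda>n. 2 * (Hs_weight s n * (cmod (x n))^2) + 2 * (Hs_weight s n * (cmod (y n))^2)) summable_on UNIV"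
    using assms by (intro summable_on_add summable_on_cmult_right) (auto simp: Hs_def)
  then have "(\<lambda>n. Hs_weight s n * (cmod (x n + y n))^2) summable_on UNIV"
  proof (rule summable_on_comparison_test)
    fix n
    have "(cmod (x n + y n))^2 \<le> (cmod (x n) + cmod (y n))^2"
      by (intro power_mono norm_triangle_ineq) simp
    also have "\<dots> \<le> 2 * (cmod (x n))^2 + 2 * (cmod (y n))^2"
      using zero_le_power2[of "cmod (x n) - cmod (y n)"] by (simp add: power2_sum power2_diff)
    finally show "Hs_weight s n * (cmod (x n + y n))^2
        \<le> 2 * (Hs_weight s n * (cmod (x n))^2) + 2 * (Hs_weight s n * (cmod (y n))^2)"
      using mult_left_mono[OF _ Hs_weight_nonneg] by (fastforce simp: algebra_simps)
  qed simp
  then show ?thesis by (simp add: Hs_def fadd_def)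
qed

lemma Hs_norm_fadd_le:
  assumes x: "x \<in> Hs s" and y: "y \<in> Hs s"
  shows "Hs_norm s (fadd x y) \<le> Hs_norm s x + Hs_norm s y"
proof -
  define tx where "tx = (\<lambda>n. sqrt (Hs_weight s n) * cmod (x n))"
  define ty where "ty = (\<lambda>n. sqrt (Hs_weight s n) * cmod (y n))"
  have "Hs_norm2 s (fadd x y) \<le> (Hs_norm s x + Hs_norm s y)^2"
    unfolding Hs_norm2_def
  proof (rule infsum_le_finite_sums)
    show "(\<lambda>n. Hs_weight s n * (cmod (fadd x y n))^2) summable_on UNIV"
      using Hs_fadd[OF x y] by (simp add: Hs_def)
    fix F :: "int set" assume F: "finite F"
    have "(\<Sum>n\<in>F. Hs_weight s n * (cmod (fadd x y n))^2) \<le> (\<Sum>n\<in>F. (tx n + ty n)^2)"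
    proof (rule sum_mono)
      fix n
      have "Hs_weight s n * (cmod (fadd x y n))^2 \<le> Hs_weight s n * (cmod (x n) + cmod (y n))^2"
        unfolding fadd_def by (intro mult_left_mono power_mono norm_triangle_ineq) auto
      then show "Hs_weight s n * (cmod (fadd x y n))^2 \<le> (tx n + ty n)^2"
        by (simp add: tx_def ty_def power2_eq_square algebra_simps)
    qed
    also have "\<dots> = (L2_set (\<lambda>n. tx n + ty n) F)^2"
      unfolding L2_set_def by (simp add: sum_nonneg)
    also have "\<dots> \<le> (L2_set tx F + L2_set ty F)^2"
      by (intro power_mono L2_set_triangle_ineq) simp
    also have "\<dots> \<le> (Hs_norm s x + Hs_norm s y)^2"
      unfolding tx_def ty_def
      by (intro power_mono add_mono L2_set_weighted_le_Hs_norm x y F) simp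
    finally show "(\<Sum>n\<in>F. Hs_weight s n * (cmod (fadd x y n))^2) \<le> (Hs_norm s x + Hs_norm s y)^2" .
  qed
  then have "sqrt (Hs_norm2 s (fadd x y)) \<le> Hs_norm s x + Hs_norm s y"
    using real_sqrt_le_mono by (fastforce simp: Hs_norm_nonneg)
  then show ?thesis by (simp add: Hs_norm_eq_sqrt)
qed

lemma Hs_norm_fadd_bound:
  "x \<in> Hs s \<Longrightarrow> y \<in> Hs s \<Longrightarrow> Hs_norm s x \<le> A \<Longrightarrow> Hs_norm s y \<le> B \<Longrightarrow> Hs_norm s (fadd x y) \<le> A + B"
  using Hs_norm_fadd_le[of x s y] by linarith

lemma Hs_fzero: "fzero \<in> Hs s" and Hs_norm_fzero: "Hs_norm s fzero = 0"
  by (simp_all add: Hs_def Hs_norm_def fzero_def)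

lemma H1_weighted [simp]: "Hs_weight s n * (cmod (H1 t x n))^2 = Hs_weight s n * (cmod (x n))^2"
  by (simp add: H1_def norm_mult)

lemma Hs_H1: "x \<in> Hs s \<Longrightarrow> H1 t x \<in> Hs s"
  by (simp add: Hs_def)

lemma Hs_norm_H1: "Hs_norm s (H1 t x) = Hs_norm s x"
  by (simp add: Hs_norm_def)

lemma Hs_fconj: "x \<in> Hs s \<Longrightarrow> fconj x \<in> Hs s"
  using has_sum_int_reflect[of "\<lambda>n. Hs_weight s n * (cmod (x n))^2" _ 0]
  by (auto simp: Hs_def fconj_def summable_on_def)

lemma Hs_norm_fconj: "Hs_norm s (fconj x) = Hs_norm s x"
  using infsum_int_reflect[of "\<lambda>n. Hs_weight s n * (cmod (x n))^2" 0]
  by (simp add: Hs_norm_def fconj_def)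

lemma H1_fadd: "H1 t (fadd x y) = fadd (H1 t x) (H1 t y)"
  by (rule ext) (simp add: H1_def fadd_def distrib_left)

lemma H1_fscale: "H1 t (fscale a x) = fscale a (H1 t x)"
  by (rule ext) (simp add: H1_def fscale_def mult.left_commute)

lemma fconj_fadd: "fconj (fadd x y) = fadd (fconj x) (fconj y)"
  by (rule ext) (simp add: fconj_def fadd_def)

lemma fconj_fscale: "fconj (fscale a x) = fscale a (fconj x)"
  by (rule ext) (simp add: fconj_def fscale_def)

section \<open>Convolution and the algebra property\<close>

lemma summable_on_norm_conv:
  assumes "l2 u" "l2 v"
  shows "(\<lambda>m. norm (u m * v (n - m))) summable_on UNIV"
proof -
  have "(\<lambda>m. (cmod (v (n - m)))^2) summable_on UNIV"
    using assms(2) has_sum_int_reflect by (fastforce simp: l2_def summable_on_def)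
  then have "(\<lambda>m. cmod (u m) * cmod (v (n - m))) summable_on UNIV"
    using assms(1) by (intro Cauchy_Schwarz_infsum(1)) (auto simp: l2_def)
  then show ?thesis by (simp add: norm_mult)
qed

lemma summable_on_conv:
  assumes "l2 u" "l2 v"
  shows "(\<lambda>m. u m * v (n - m)) summable_on UNIV"
  using abs_summable_summable[OF summable_on_norm_conv[OF assms]] .

lemma norm_fmult_le:
  assumes "l2 u" "l2 v"
  shows "cmod (fmult u v n) \<le> (\<Sum>\<^sub>\<infinity>m. cmod (u m) * cmod (v (n - m)))"
  unfolding fmult_def using norm_infsum_bound[OF summable_on_norm_conv[OF assms, of n]]
  by (simp add: norm_mult)

lemma fmult_fadd_left:
  assumes "l2 x" "l2 y" "l2 v"
  shows "fmult (fadd x y) v = fadd (fmult x v) (fmult y v)"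
  unfolding fmult_def fadd_def
  by (rule ext, subst infsum_add[symmetric]) (auto intro!: summable_on_conv assms simp: distrib_right)

lemma fmult_fadd_right:
  assumes "l2 x" "l2 y" "l2 u"
  shows "fmult u (fadd x y) = fadd (fmult u x) (fmult u y)"
  unfolding fmult_def fadd_def
  by (rule ext, subst infsum_add[symmetric]) (auto intro!: summable_on_conv assms simp: distrib_left)

lemma fmult_fscale_left: "fmult (fscale a x) v = fscale a (fmult x v)"
  unfolding fmult_def fscale_def by (rule ext) (simp add: mult.assoc infsum_cmult_right')

lemma fmult_fscale_right: "fmult u (fscale a x) = fscale a (fmult u x)"
  unfolding fmult_def fscale_def by (rule ext) (simp add: mult.left_commute infsum_cmult_right')

lemma has_sum_conv_nonneg:
  fixes g h :: "int \<Rightarrow> real"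
  assumes nonneg: "\<And>m. g m \<ge> 0" "\<And>m. h m \<ge> 0"
    and G: "(g has_sum G) UNIV" and H: "(h has_sum H) UNIV"
  shows "((\<lambda>n. \<Sum>\<^sub>\<infinity>m. g m * h (n - m)) has_sum G * H) UNIV"
proof -
  define f where "f = (\<lambda>(m, n). g m * h (n - m))"
  have rows: "((\<lambda>n. f (m, n)) has_sum g m * H) UNIV" for m
    using has_sum_cmult_right[OF has_sum_int_translate[OF H, of "- m"], of "g m"]
    by (simp add: f_def)
  have "f summable_on UNIV \<times> UNIV"
    using rows summable_on_cmult_left[OF has_sum_imp_summable[OF G]] nonneg
    by (intro summable_on_SigmaI) (auto simp: f_def)
  then have "(f has_sum G * H) (UNIV \<times> UNIV)"
    using rows has_sum_cmult_left[OF G] by (intro has_sum_SigmaI) auto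
  then have swapped: "((\<lambda>(n, m). f (m, n)) has_sum G * H) (UNIV \<times> UNIV)"
    by (subst (asm) has_sum_swap)
  have cols: "(\<lambda>m. f (m, n)) summable_on UNIV" for n
    using summable_on_SigmaD1[of "\<lambda>n m. f (m, n)" UNIV "\<lambda>_. UNIV" n] has_sum_imp_summable[OF swapped]
    by simp
  have "((\<lambda>n. \<Sum>\<^sub>\<infinity>m. f (m, n)) has_sum G * H) UNIV"
    by (rule has_sum_SigmaD[OF swapped]) (simp add: cols)
  then show ?thesis by (simp add: f_def)
qed

definition Hs_alg_const :: "real \<Rightarrow> real" where
  "Hs_alg_const s = 2 * 4 powr s * (\<Sum>\<^sub>\<infinity>n. 1 / Hs_weight s n)"

lemma Hs_alg_const_nonneg: "Hs_alg_const s \<ge> 0"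
  unfolding Hs_alg_const_def by (intro mult_nonneg_nonneg infsum_nonneg) auto

lemma one_div_mult_le:
  fixes a b c d :: real
  assumes "a > 0" "b > 0" "d > 0" "d \<le> c * (a + b)"
  shows "1 / (a * b) \<le> c / d * (1 / b + 1 / a)"
proof -
  have "1 / (a * b) = d / (d * a * b)"
    using assms by simp
  also have "\<dots> \<le> c * (a + b) / (d * a * b)"
    using assms by (intro divide_right_mono) auto
  also have "\<dots> = c / d * (1 / b + 1 / a)"
    using assms by (simp add: field_simps)
  finally show ?thesis .
qed

lemma inverse_Hs_weight_conv:
  assumes s: "s > 1/2"
  shows "(\<lambda>m. 1 / (Hs_weight s m * Hs_weight s (n - m))) summable_on UNIV"
    and "(\<Sum>\<^sub>\<infinity>m. 1 / (Hs_weight s m * Hs_weight s (n - m))) \<le> Hs_alg_const s / Hs_weight s n"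
proof -
  define W where "W = Hs_weight s"
  have Wp: "\<And>n. W n > 0" by (simp add: W_def Hs_weight_pos)
  have pointwise: "1 / (W m * W (n - m)) \<le> 4 powr s / W n * (1 / W (n - m) + 1 / W m)" for m
    using Wp Hs_weight_le_sum[of s n m] s by (intro one_div_mult_le) (auto simp: W_def)
  have inv: "(\<lambda>m. 1 / W m) summable_on UNIV"
    using summable_inverse_Hs_weight[OF s] by (simp add: W_def)
  have inv_reflect: "(\<lambda>m. 1 / W (n - m)) summable_on UNIV"
    using has_sum_int_reflect[OF has_sum_infsum[OF inv]] summable_on_def by blast
  have bound: "(\<lambda>m. 4 powr s / W n * (1 / W (n - m) + 1 / W m)) summable_on UNIV"
    by (intro summable_on_cmult_right summable_on_add inv inv_reflect)
  show summable: "(\<lambda>m. 1 / (Hs_weight s m * Hs_weight s (n - m))) summable_on UNIV"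
    using summable_on_comparison_test[OF bound pointwise] Wp by (simp add: W_def less_imp_le)
  have "(\<Sum>\<^sub>\<infinity>m. 1 / (W m * W (n - m))) \<le> (\<Sum>\<^sub>\<infinity>m. 4 powr s / W n * (1 / W (n - m) + 1 / W m))"
    using summable by (intro infsum_mono bound pointwise) (simp add: W_def)
  also have "\<dots> = 4 powr s / W n * (2 * (\<Sum>\<^sub>\<infinity>m. 1 / W m))"
    using infsum_int_reflect[of "\<lambda>m. 1 / W m" n]
    by (simp only: infsum_cmult_right' infsum_add[OF inv_reflect inv]) simp
  also have "\<dots> = Hs_alg_const s / W n"
    by (simp add: Hs_alg_const_def W_def)
  finally show "(\<Sum>\<^sub>\<infinity>m. 1 / (Hs_weight s m * Hs_weight s (n - m))) \<le> Hs_alg_const s / Hs_weight s n"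
    by (simp add: W_def)
qed

lemma Hs_weighted_fmult_le:
  assumes s: "s > 1/2" and u: "u \<in> Hs s" and v: "v \<in> Hs s"
  shows "Hs_weight s n * (cmod (fmult u v n))^2
    \<le> Hs_alg_const s * (\<Sum>\<^sub>\<infinity>m. Hs_weight s m * (cmod (u m))^2 * (Hs_weight s (n - m) * (cmod (v (n - m)))^2))"
    (is "_ \<le> _ * ?P")
proof -
  define W where "W = Hs_weight s"
  have Wp: "\<And>n. W n > 0" by (simp add: W_def Hs_weight_pos)
  define a where "a m = sqrt (W m * W (n - m)) * (cmod (u m) * cmod (v (n - m)))" for m
  define b where "b m = 1 / sqrt (W m * W (n - m))" for m
  have ab: "a m * b m = cmod (u m) * cmod (v (n - m))" for m
    using Wp[of m] Wp[of "n - m"] by (simp add: a_def b_def)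
  have ab_nonneg: "a m \<ge> 0" "b m \<ge> 0" for m
    using Wp[of m] Wp[of "n - m"] by (simp_all add: a_def b_def)
  have a2: "(a m)^2 = W m * (cmod (u m))^2 * (W (n - m) * (cmod (v (n - m)))^2)" for m
    using Wp[of m] Wp[of "n - m"] by (simp add: a_def power_mult_distrib)
  have b2: "(b m)^2 = 1 / (W m * W (n - m))" for m
    using Wp[of m] Wp[of "n - m"] by (simp add: b_def power_divide)
  have "(\<lambda>m. W m * (cmod (u m))^2 * (W (n - m) * (cmod (v (n - m)))^2)) summable_on UNIV"
  proof (rule summable_on_comparison_test)
    show "(\<lambda>m. W m * (cmod (u m))^2 * Hs_norm2 s v) summable_on UNIV"
      using u by (intro summable_on_cmult_left) (simp add: Hs_def W_def)
    show "W m * (cmod (u m))^2 * (W (n - m) * (cmod (v (n - m)))^2) \<le> W m * (cmod (u m))^2 * Hs_norm2 s v" for m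
      using Hs_weighted_le_Hs_norm2[OF v] by (intro mult_left_mono) (auto simp: W_def)
  qed (simp add: W_def)
  then have sa: "(\<lambda>m. (a m)^2) summable_on UNIV"
    by (simp add: a2)
  have sb: "(\<lambda>m. (b m)^2) summable_on UNIV"
    using inverse_Hs_weight_conv(1)[OF s] by (simp add: b2 W_def)
  have "(cmod (fmult u v n))^2 \<le> (\<Sum>\<^sub>\<infinity>m. a m * b m)^2"
    using norm_fmult_le[of u v n] Hs_imp_l2[of s] s u v
    by (intro power_mono) (simp_all add: ab)
  also have "\<dots> \<le> (\<Sum>\<^sub>\<infinity>m. (a m)^2) * (\<Sum>\<^sub>\<infinity>m. (b m)^2)"
    using ab_nonneg by (intro Cauchy_Schwarz_infsum(2) sa sb) auto
  also have "\<dots> \<le> ?P * (Hs_alg_const s / W n)"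
    unfolding a2 b2 W_def
    by (intro mult_left_mono inverse_Hs_weight_conv(2)[OF s] infsum_nonneg) simp
  finally have "W n * (cmod (fmult u v n))^2 \<le> W n * (?P * (Hs_alg_const s / W n))"
    using Wp[of n] by (intro mult_left_mono) auto
  then show ?thesis
    using Wp[of n] by (simp add: W_def mult.commute)
qed

lemma Hs_fmult:
  assumes s: "s > 1/2" and u: "u \<in> Hs s" and v: "v \<in> Hs s"
  shows "fmult u v \<in> Hs s"
    and "Hs_norm s (fmult u v) \<le> sqrt (Hs_alg_const s) * Hs_norm s u * Hs_norm s v"
proof -
  define g where "g m = Hs_weight s m * (cmod (u m))^2" for m
  define h where "h m = Hs_weight s m * (cmod (v m))^2" for m
  have "((\<lambda>n. \<Sum>\<^sub>\<infinity>m. g m * h (n - m)) has_sum Hs_norm2 s u * Hs_norm2 s v) UNIV"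
    using u v unfolding g_def h_def Hs_norm2_def
    by (intro has_sum_conv_nonneg has_sum_infsum) (auto simp: Hs_def)
  then have conv: "((\<lambda>n. Hs_alg_const s * (\<Sum>\<^sub>\<infinity>m. g m * h (n - m)))
      has_sum Hs_alg_const s * (Hs_norm2 s u * Hs_norm2 s v)) UNIV"
    by (rule has_sum_cmult_right)
  have pointwise: "Hs_weight s n * (cmod (fmult u v n))^2 \<le> Hs_alg_const s * (\<Sum>\<^sub>\<infinity>m. g m * h (n - m))" for n
    unfolding g_def h_def by (rule Hs_weighted_fmult_le[OF s u v])
  have "(\<lambda>n. Hs_weight s n * (cmod (fmult u v n))^2) summable_on UNIV"
    using summable_on_comparison_test[OF has_sum_imp_summable[OF conv] pointwise] by simp
  then show "fmult u v \<in> Hs s" by (simp add: Hs_def)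
  have "Hs_norm2 s (fmult u v) \<le> Hs_alg_const s * (Hs_norm2 s u * Hs_norm2 s v)"
    using has_sum_mono[OF has_sum_infsum[OF \<open>_ summable_on UNIV\<close>] conv pointwise]
    by (simp add: Hs_norm2_def)
  then have "sqrt (Hs_norm2 s (fmult u v)) \<le> sqrt (Hs_alg_const s * (Hs_norm2 s u * Hs_norm2 s v))"
    by (rule real_sqrt_le_mono)
  then show "Hs_norm s (fmult u v) \<le> sqrt (Hs_alg_const s) * Hs_norm s u * Hs_norm s v"
    by (simp add: Hs_norm_eq_sqrt real_sqrt_mult)
qed

section \<open>The trilinear form behind \<open>F\<close>\<close>

definition Ftri :: "real \<Rightarrow> fseq \<Rightarrow> fseq \<Rightarrow> fseq \<Rightarrow> fseq" where
  "Ftri t a b c = H1 (- t) (fmult (H1 t a) (fmult (H1 t b) (fconj (H1 t c))))"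

lemma Fnl_eq_Ftri: "Fnl t w = Ftri t w w w"
  by (simp add: Fnl_def Ftri_def Let_def)

lemma Ftri_fscale:
  "Ftri t (fscale r a) b c = fscale r (Ftri t a b c)"
  "Ftri t a (fscale r b) c = fscale r (Ftri t a b c)"
  "Ftri t a b (fscale r c) = fscale r (Ftri t a b c)"
  by (simp_all add: Ftri_def H1_fscale fconj_fscale fmult_fscale_left fmult_fscale_right)

context
  fixes s :: real
  assumes s: "s > 1/2"
begin

private lemma l2_of_Hs: "x \<in> Hs s \<Longrightarrow> l2 x"
  using Hs_imp_l2[of s x] s by simp

private lemma Hs_inner: "b \<in> Hs s \<Longrightarrow> c \<in> Hs s \<Longrightarrow> fmult (H1 t b) (fconj (H1 t c)) \<in> Hs s"
  by (intro Hs_fmult(1)[OF s] Hs_H1 Hs_fconj)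

lemma Hs_Ftri: "a \<in> Hs s \<Longrightarrow> b \<in> Hs s \<Longrightarrow> c \<in> Hs s \<Longrightarrow> Ftri t a b c \<in> Hs s"
  unfolding Ftri_def by (intro Hs_H1 Hs_fmult(1)[OF s] Hs_inner)

lemma Hs_norm_Ftri_le:
  assumes "a \<in> Hs s" "b \<in> Hs s" "c \<in> Hs s"
  shows "Hs_norm s (Ftri t a b c) \<le> Hs_alg_const s * (Hs_norm s a * Hs_norm s b * Hs_norm s c)"
proof -
  define k where "k = sqrt (Hs_alg_const s)"
  have k: "k \<ge> 0" "k * k = Hs_alg_const s"
    using Hs_alg_const_nonneg by (simp_all add: k_def)
  have "Hs_norm s (Ftri t a b c) \<le> k * Hs_norm s a * Hs_norm s (fmult (H1 t b) (fconj (H1 t c)))"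
    using Hs_fmult(2)[OF s Hs_H1[OF assms(1)] Hs_inner[OF assms(2,3)], of t t]
    by (simp add: Ftri_def Hs_norm_H1 k_def)
  also have "\<dots> \<le> k * Hs_norm s a * (k * Hs_norm s b * Hs_norm s c)"
    using Hs_fmult(2)[OF s Hs_H1[OF assms(2)] Hs_fconj[OF Hs_H1[OF assms(3)]], of t t] k(1)
    by (intro mult_left_mono) (simp_all add: Hs_norm_H1 Hs_norm_fconj Hs_norm_nonneg k_def)
  also have "\<dots> = Hs_alg_const s * (Hs_norm s a * Hs_norm s b * Hs_norm s c)"
    using k(2) by (simp add: algebra_simps)
  finally show ?thesis .
qed

lemma Ftri_fadd1:
  assumes "a \<in> Hs s" "a' \<in> Hs s" "b \<in> Hs s" "c \<in> Hs s"
  shows "Ftri t (fadd a a') b c = fadd (Ftri t a b c) (Ftri t a' b c)"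
  using assms by (simp add: Ftri_def H1_fadd fmult_fadd_left l2_of_Hs Hs_H1 Hs_inner)

lemma Ftri_fadd2:
  assumes "a \<in> Hs s" "b \<in> Hs s" "b' \<in> Hs s" "c \<in> Hs s"
  shows "Ftri t a (fadd b b') c = fadd (Ftri t a b c) (Ftri t a b' c)"
  using assms
  by (simp add: Ftri_def H1_fadd fmult_fadd_left fmult_fadd_right l2_of_Hs Hs_H1 Hs_fconj Hs_inner)

lemma Ftri_fadd3:
  assumes "a \<in> Hs s" "b \<in> Hs s" "c \<in> Hs s" "c' \<in> Hs s"
  shows "Ftri t a b (fadd c c') = fadd (Ftri t a b c) (Ftri t a b c')"
  using assms
  by (simp add: Ftri_def H1_fadd fconj_fadd fmult_fadd_right l2_of_Hs Hs_H1 Hs_fconj Hs_inner)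

end

section \<open>Cubic maps are smooth\<close>

lemma length_eq_3_conv:
  "length hs = 3 \<longleftrightarrow> (\<exists>a b c. hs = [a, b, c])"
  by (auto simp: numeral_3_eq_3 length_Suc_conv)

lemma multilin_bounded_0I: "c \<in> Hs s \<Longrightarrow> multilin_bounded s 0 (\<lambda>_. c)"
  unfolding multilin_bounded_def by (auto intro!: exI[where x="Hs_norm s c"])

lemma multilin_bounded_fzero: "multilin_bounded s k (\<lambda>_. fzero)"
proof -
  have "fadd fzero fzero = fzero" "fscale r fzero = fzero" for r
    by (simp_all add: fadd_def fscale_def fzero_def)
  then show ?thesis
    unfolding multilin_bounded_def by (auto simp: Hs_fzero Hs_norm_fzero intro!: exI[where x=0])
qed

lemma multilin_bounded_1I:
  assumes "\<And>a. a \<in> Hs s \<Longrightarrow> L a \<in> Hs s"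
    and "\<And>a a'. a \<in> Hs s \<Longrightarrow> a' \<in> Hs s \<Longrightarrow> L (fadd a a') = fadd (L a) (L a')"
    and "\<And>r a. a \<in> Hs s \<Longrightarrow> L (fscale r a) = fscale r (L a)"
    and "\<And>a. a \<in> Hs s \<Longrightarrow> Hs_norm s (L a) \<le> C * Hs_norm s a"
  shows "multilin_bounded s 1 (\<lambda>hs. L (hs ! 0))"
  unfolding multilin_bounded_def
  using assms by (auto simp: length_Suc_conv intro!: exI[where x=C])

lemma multilin_bounded_2I:
  assumes "\<And>a b. a \<in> Hs s \<Longrightarrow> b \<in> Hs s \<Longrightarrow> B a b \<in> Hs s"
    and "\<And>a a' b. a \<in> Hs s \<Longrightarrow> a' \<in> Hs s \<Longrightarrow> b \<in> Hs s \<Longrightarrow> B (fadd a a') b = fadd (B a b) (B a' b)"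
    and "\<And>a b b'. a \<in> Hs s \<Longrightarrow> b \<in> Hs s \<Longrightarrow> b' \<in> Hs s \<Longrightarrow> B a (fadd b b') = fadd (B a b) (B a b')"
    and "\<And>r a b. a \<in> Hs s \<Longrightarrow> b \<in> Hs s \<Longrightarrow> B (fscale r a) b = fscale r (B a b)"
    and "\<And>r a b. a \<in> Hs s \<Longrightarrow> b \<in> Hs s \<Longrightarrow> B a (fscale r b) = fscale r (B a b)"
    and "\<And>a b. a \<in> Hs s \<Longrightarrow> b \<in> Hs s \<Longrightarrow> Hs_norm s (B a b) \<le> C * (Hs_norm s a * Hs_norm s b)"
  shows "multilin_bounded s 2 (\<lambda>hs. B (hs ! 0) (hs ! 1))"
  unfolding multilin_bounded_def
proof (intro conjI allI impI)
  fix i :: nat and hs x y r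
  assume "i < 2" and hs: "length hs = 2 \<and> set hs \<subseteq> Hs s \<and> x \<in> Hs s \<and> y \<in> Hs s"
  then consider "i = 0" | "i = 1" by linarith
  moreover obtain a b where "hs = [a, b]"
    using hs by (auto simp: numeral_2_eq_2 length_Suc_conv)
  ultimately show "B (hs[i := fadd x y] ! 0) (hs[i := fadd x y] ! 1)
      = fadd (B (hs[i := x] ! 0) (hs[i := x] ! 1)) (B (hs[i := y] ! 0) (hs[i := y] ! 1))"
    and "B (hs[i := fscale r x] ! 0) (hs[i := fscale r x] ! 1) = fscale r (B (hs[i := x] ! 0) (hs[i := x] ! 1))"
    using assms hs by (cases; simp)+
qed (use assms in \<open>auto simp: numeral_2_eq_2 length_Suc_conv intro!: exI[where x=C]\<close>)

lemma multilin_bounded_3I: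
  assumes "\<And>a b c. a \<in> Hs s \<Longrightarrow> b \<in> Hs s \<Longrightarrow> c \<in> Hs s \<Longrightarrow> T a b c \<in> Hs s"
    and "\<And>a a' b c. a \<in> Hs s \<Longrightarrow> a' \<in> Hs s \<Longrightarrow> b \<in> Hs s \<Longrightarrow> c \<in> Hs s \<Longrightarrow>
      T (fadd a a') b c = fadd (T a b c) (T a' b c)"
    and "\<And>a b b' c. a \<in> Hs s \<Longrightarrow> b \<in> Hs s \<Longrightarrow> b' \<in> Hs s \<Longrightarrow> c \<in> Hs s \<Longrightarrow>
      T a (fadd b b') c = fadd (T a b c) (T a b' c)"
    and "\<And>a b c c'. a \<in> Hs s \<Longrightarrow> b \<in> Hs s \<Longrightarrow> c \<in> Hs s \<Longrightarrow> c' \<in> Hs s \<Longrightarrow>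
      T a b (fadd c c') = fadd (T a b c) (T a b c')"
    and "\<And>r a b c. a \<in> Hs s \<Longrightarrow> b \<in> Hs s \<Longrightarrow> c \<in> Hs s \<Longrightarrow> T (fscale r a) b c = fscale r (T a b c)"
    and "\<And>r a b c. a \<in> Hs s \<Longrightarrow> b \<in> Hs s \<Longrightarrow> c \<in> Hs s \<Longrightarrow> T a (fscale r b) c = fscale r (T a b c)"
    and "\<And>r a b c. a \<in> Hs s \<Longrightarrow> b \<in> Hs s \<Longrightarrow> c \<in> Hs s \<Longrightarrow> T a b (fscale r c) = fscale r (T a b c)"
    and "\<And>a b c. a \<in> Hs s \<Longrightarrow> b \<in> Hs s \<Longrightarrow> c \<in> Hs s \<Longrightarrow>
      Hs_norm s (T a b c) \<le> C * (Hs_norm s a * Hs_norm s b * Hs_norm s c)"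
  shows "multilin_bounded s 3 (\<lambda>hs. T (hs ! 0) (hs ! 1) (hs ! 2))"
  unfolding multilin_bounded_def
proof (intro conjI allI impI)
  fix i :: nat and hs x y r
  assume "i < 3" and hs: "length hs = 3 \<and> set hs \<subseteq> Hs s \<and> x \<in> Hs s \<and> y \<in> Hs s"
  then consider "i = 0" | "i = 1" | "i = 2" by linarith
  moreover obtain a b c where "hs = [a, b, c]"
    using hs by (auto simp: length_eq_3_conv)
  ultimately show "T (hs[i := fadd x y] ! 0) (hs[i := fadd x y] ! 1) (hs[i := fadd x y] ! 2)
      = fadd (T (hs[i := x] ! 0) (hs[i := x] ! 1) (hs[i := x] ! 2)) (T (hs[i := y] ! 0) (hs[i := y] ! 1) (hs[i := y] ! 2))"
    and "T (hs[i := fscale r x] ! 0) (hs[i := fscale r x] ! 1) (hs[i := fscale r x] ! 2)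
      = fscale r (T (hs[i := x] ! 0) (hs[i := x] ! 1) (hs[i := x] ! 2))"
    using assms hs by (cases; simp)+
qed (use assms in \<open>auto simp: length_eq_3_conv mult.assoc intro!: exI[where x=C]\<close>)

locale Hs_trilinear =
  fixes s K :: real and T :: "fseq \<Rightarrow> fseq \<Rightarrow> fseq \<Rightarrow> fseq"
  assumes closed: "\<And>a b c. a \<in> Hs s \<Longrightarrow> b \<in> Hs s \<Longrightarrow> c \<in> Hs s \<Longrightarrow> T a b c \<in> Hs s"
    and fadd1: "\<And>a a' b c. a \<in> Hs s \<Longrightarrow> a' \<in> Hs s \<Longrightarrow> b \<in> Hs s \<Longrightarrow> c \<in> Hs s \<Longrightarrow>
      T (fadd a a') b c = fadd (T a b c) (T a' b c)"
    and fadd2: "\<And>a b b' c. a \<in> Hs s \<Longrightarrow> b \<in> Hs s \<Longrightarrow> b' \<in> Hs s \<Longrightarrow> c \<in> Hs s \<Longrightarrow>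
      T a (fadd b b') c = fadd (T a b c) (T a b' c)"
    and fadd3: "\<And>a b c c'. a \<in> Hs s \<Longrightarrow> b \<in> Hs s \<Longrightarrow> c \<in> Hs s \<Longrightarrow> c' \<in> Hs s \<Longrightarrow>
      T a b (fadd c c') = fadd (T a b c) (T a b c')"
    and fscale1: "\<And>r a b c. a \<in> Hs s \<Longrightarrow> b \<in> Hs s \<Longrightarrow> c \<in> Hs s \<Longrightarrow> T (fscale r a) b c = fscale r (T a b c)"
    and fscale2: "\<And>r a b c. a \<in> Hs s \<Longrightarrow> b \<in> Hs s \<Longrightarrow> c \<in> Hs s \<Longrightarrow> T a (fscale r b) c = fscale r (T a b c)"
    and fscale3: "\<And>r a b c. a \<in> Hs s \<Longrightarrow> b \<in> Hs s \<Longrightarrow> c \<in> Hs s \<Longrightarrow> T a b (fscale r c) = fscale r (T a b c)"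
    and bound: "\<And>a b c. a \<in> Hs s \<Longrightarrow> b \<in> Hs s \<Longrightarrow> c \<in> Hs s \<Longrightarrow>
      Hs_norm s (T a b c) \<le> K * (Hs_norm s a * Hs_norm s b * Hs_norm s c)"
    and K_nonneg: "K \<ge> 0"
begin

definition cube_deriv1 :: "fseq \<Rightarrow> fseq \<Rightarrow> fseq" where
  "cube_deriv1 w h = fadd (fadd (T h w w) (T w h w)) (T w w h)"

definition cube_sym :: "fseq \<Rightarrow> fseq \<Rightarrow> fseq \<Rightarrow> fseq" where
  "cube_sym a b c = fadd (fadd (fadd (T a b c) (T b a c)) (fadd (T a c b) (T b c a))) (fadd (T c a b) (T c b a))"

definition cube_deriv :: "nat \<Rightarrow> fseq \<Rightarrow> fseq list \<Rightarrow> fseq" where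
  "cube_deriv k w hs =
    (if k = 0 then T w w w
     else if k = 1 then cube_deriv1 w (hs ! 0)
     else if k = 2 then cube_sym w (hs ! 0) (hs ! 1)
     else if k = 3 then cube_sym (hs ! 0) (hs ! 1) (hs ! 2)
     else fzero)"

lemma Hs_cube_deriv1: "w \<in> Hs s \<Longrightarrow> h \<in> Hs s \<Longrightarrow> cube_deriv1 w h \<in> Hs s"
  by (simp add: cube_deriv1_def Hs_fadd closed)

lemma Hs_cube_sym: "a \<in> Hs s \<Longrightarrow> b \<in> Hs s \<Longrightarrow> c \<in> Hs s \<Longrightarrow> cube_sym a b c \<in> Hs s"
  by (simp add: cube_sym_def Hs_fadd closed)

lemma cube_deriv1_linear:
  assumes "w \<in> Hs s" "h \<in> Hs s" "h' \<in> Hs s"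
  shows "cube_deriv1 w (fadd h h') = fadd (cube_deriv1 w h) (cube_deriv1 w h')"
    and "cube_deriv1 w (fscale r h) = fscale r (cube_deriv1 w h)"
  using assms
  by (simp_all add: cube_deriv1_def fadd1 fadd2 fadd3 fscale1 fscale2 fscale3)
    (simp_all add: fadd_def fscale_def algebra_simps)

lemma cube_sym_linear:
  assumes "a \<in> Hs s" "a' \<in> Hs s" "b \<in> Hs s" "b' \<in> Hs s" "c \<in> Hs s" "c' \<in> Hs s"
  shows "cube_sym (fadd a a') b c = fadd (cube_sym a b c) (cube_sym a' b c)"
    and "cube_sym a (fadd b b') c = fadd (cube_sym a b c) (cube_sym a b' c)"
    and "cube_sym a b (fadd c c') = fadd (cube_sym a b c) (cube_sym a b c')"
    and "cube_sym (fscale r a) b c = fscale r (cube_sym a b c)"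
    and "cube_sym a (fscale r b) c = fscale r (cube_sym a b c)"
    and "cube_sym a b (fscale r c) = fscale r (cube_sym a b c)"
  using assms
  by (simp_all add: cube_sym_def fadd1 fadd2 fadd3 fscale1 fscale2 fscale3)
    (simp_all add: fadd_def fscale_def algebra_simps)

lemma Hs_norm_cube_deriv1_le:
  assumes "w \<in> Hs s" "h \<in> Hs s"
  shows "Hs_norm s (cube_deriv1 w h) \<le> 3 * K * (Hs_norm s w)^2 * Hs_norm s h"
proof -
  have "Hs_norm s (cube_deriv1 w h) \<le> K * (Hs_norm s h * Hs_norm s w * Hs_norm s w)
      + K * (Hs_norm s w * Hs_norm s h * Hs_norm s w) + K * (Hs_norm s w * Hs_norm s w * Hs_norm s h)"
    unfolding cube_deriv1_def using assms by (intro Hs_norm_fadd_bound Hs_fadd closed bound)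
  then show ?thesis by (simp add: power2_eq_square algebra_simps)
qed

lemma Hs_norm_cube_sym_le:
  assumes "a \<in> Hs s" "b \<in> Hs s" "c \<in> Hs s"
  shows "Hs_norm s (cube_sym a b c) \<le> 6 * K * (Hs_norm s a * Hs_norm s b * Hs_norm s c)"
proof -
  have "Hs_norm s (cube_sym a b c) \<le> K * (Hs_norm s a * Hs_norm s b * Hs_norm s c)
      + K * (Hs_norm s b * Hs_norm s a * Hs_norm s c)
      + (K * (Hs_norm s a * Hs_norm s c * Hs_norm s b) + K * (Hs_norm s b * Hs_norm s c * Hs_norm s a))
      + (K * (Hs_norm s c * Hs_norm s a * Hs_norm s b) + K * (Hs_norm s c * Hs_norm s b * Hs_norm s a))"
    unfolding cube_sym_def using assms by (intro Hs_norm_fadd_bound Hs_fadd closed bound)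
  then show ?thesis by (simp add: algebra_simps)
qed

lemma multilin_bounded_cube_deriv:
  assumes w: "w \<in> Hs s"
  shows "multilin_bounded s k (cube_deriv k w)"
proof -
  consider "k = 0" | "k = 1" | "k = 2" | "k = 3" | "k \<ge> 4" by linarith
  then show ?thesis
  proof cases
    case 1
    then show ?thesis
      using multilin_bounded_0I[OF closed[OF w w w]] by (simp add: cube_deriv_def[abs_def])
  next
    case 2
    have "multilin_bounded s 1 (\<lambda>hs. cube_deriv1 w (hs ! 0))"
      using w by (intro multilin_bounded_1I[where C="3 * K * (Hs_norm s w)^2"])
        (simp_all add: Hs_cube_deriv1 cube_deriv1_linear Hs_norm_cube_deriv1_le)
    then show ?thesis
      using 2 by (simp add: cube_deriv_def[abs_def])
  next
    case 3
    have "multilin_bounded s 2 (\<lambda>hs. cube_sym w (hs ! 0) (hs ! 1))"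
      using w Hs_norm_cube_sym_le[OF w]
      by (intro multilin_bounded_2I[where C="6 * K * Hs_norm s w"])
        (simp_all add: Hs_cube_sym cube_sym_linear mult.assoc)
    then show ?thesis
      using 3 by (simp add: cube_deriv_def[abs_def])
  next
    case 4
    have "multilin_bounded s 3 (\<lambda>hs. cube_sym (hs ! 0) (hs ! 1) (hs ! 2))"
      by (intro multilin_bounded_3I[where C="6 * K"])
        (simp_all add: Hs_cube_sym cube_sym_linear Hs_norm_cube_sym_le)
    then show ?thesis
      using 4 by (simp add: cube_deriv_def[abs_def])
  next
    case 5
    then show ?thesis
      using multilin_bounded_fzero[of s k] by (simp add: cube_deriv_def[abs_def])
  qed
qed

abbreviation cube_remainder :: "nat \<Rightarrow> fseq \<Rightarrow> fseq \<Rightarrow> fseq list \<Rightarrow> fseq" where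
  "cube_remainder k w h hs \<equiv>
     fdiff (fdiff (cube_deriv k (fadd w h) hs) (cube_deriv k w hs)) (cube_deriv (Suc k) w (h # hs))"

lemma cube_remainder_0:
  assumes "w \<in> Hs s" "h \<in> Hs s"
  shows "cube_remainder 0 w h [] = fadd (fadd (T h h w) (T h w h)) (fadd (T w h h) (T h h h))"
  using assms
  by (simp add: cube_deriv_def cube_deriv1_def fadd1 fadd2 fadd3 Hs_fadd closed)
    (simp add: fadd_def fdiff_def algebra_simps)

lemma cube_remainder_1:
  assumes "w \<in> Hs s" "h \<in> Hs s" "a \<in> Hs s"
  shows "cube_remainder 1 w h [a] = fadd (fadd (T a h h) (T h a h)) (T h h a)"
  using assms
  by (simp add: cube_deriv_def cube_deriv1_def cube_sym_def fadd1 fadd2 fadd3 Hs_fadd closed)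
    (simp add: fadd_def fdiff_def algebra_simps)

lemma cube_remainder_vanishes:
  assumes "k \<ge> 2" "w \<in> Hs s" "h \<in> Hs s" "length hs = k" "set hs \<subseteq> Hs s"
  shows "cube_remainder k w h hs = fzero"
proof -
  have "fdiff (fdiff x x) fzero = fzero" for x
    by (simp add: fdiff_def fzero_def)
  moreover have "cube_remainder 2 w h [a, b] = fzero" if "a \<in> Hs s" "b \<in> Hs s" for a b
    using assms that
    by (simp add: cube_deriv_def cube_sym_def fadd1 fadd2 fadd3 Hs_fadd closed)
      (simp add: fadd_def fdiff_def fzero_def algebra_simps)
  ultimately show ?thesis
    using assms by (auto simp: cube_deriv_def numeral_2_eq_2 length_Suc_conv)
qed

lemma Hs_norm_cube_remainder_0_le:
  assumes w: "w \<in> Hs s" and h: "h \<in> Hs s" "Hs_norm s h \<le> 1"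
  shows "Hs_norm s (cube_remainder 0 w h []) \<le> K * (3 * Hs_norm s w + 1) * (Hs_norm s h)^2"
proof -
  have "Hs_norm s (cube_remainder 0 w h [])
      \<le> K * (Hs_norm s h * Hs_norm s h * Hs_norm s w) + K * (Hs_norm s h * Hs_norm s w * Hs_norm s h)
        + (K * (Hs_norm s w * Hs_norm s h * Hs_norm s h) + K * (Hs_norm s h * Hs_norm s h * Hs_norm s h))"
    unfolding cube_remainder_0[OF w h(1)] using w h by (intro Hs_norm_fadd_bound Hs_fadd closed bound)
  also have "\<dots> = K * (3 * Hs_norm s w + Hs_norm s h) * (Hs_norm s h)^2"
    by (simp add: power2_eq_square algebra_simps)
  also have "\<dots> \<le> K * (3 * Hs_norm s w + 1) * (Hs_norm s h)^2"
    using h K_nonneg by (intro mult_right_mono mult_left_mono) auto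
  finally show ?thesis .
qed

lemma Hs_norm_cube_remainder_1_le:
  assumes w: "w \<in> Hs s" and h: "h \<in> Hs s" and a: "a \<in> Hs s"
  shows "Hs_norm s (cube_remainder 1 w h [a]) \<le> 3 * K * (Hs_norm s h)^2 * Hs_norm s a"
proof -
  have "Hs_norm s (cube_remainder 1 w h [a])
      \<le> K * (Hs_norm s a * Hs_norm s h * Hs_norm s h) + K * (Hs_norm s h * Hs_norm s a * Hs_norm s h)
        + K * (Hs_norm s h * Hs_norm s h * Hs_norm s a)"
    unfolding cube_remainder_1[OF w h a] using h a by (intro Hs_norm_fadd_bound Hs_fadd closed bound)
  then show ?thesis
    by (simp add: power2_eq_square algebra_simps)
qed

lemma cube_remainder_quadratic:
  assumes w: "w \<in> Hs s"
  obtains C where "C \<ge> 0"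
    and "\<And>h hs. h \<in> Hs s \<Longrightarrow> Hs_norm s h \<le> 1 \<Longrightarrow> length hs = k \<Longrightarrow> set hs \<subseteq> Hs s \<Longrightarrow>
      Hs_norm s (cube_remainder k w h hs) \<le> C * (Hs_norm s h)^2 * prod_list (map (Hs_norm s) hs)"
proof -
  consider "k = 0" | "k = 1" | "k \<ge> 2" by linarith
  then show ?thesis
  proof cases
    case 1
    then show ?thesis
      using Hs_norm_cube_remainder_0_le[OF w] K_nonneg
      by (intro that[of "K * (3 * Hs_norm s w + 1)"]) (simp_all add: Hs_norm_nonneg)
  next
    case 2
    have "Hs_norm s (cube_remainder k w h hs) \<le> 3 * K * (Hs_norm s h)^2 * prod_list (map (Hs_norm s) hs)"
      if "h \<in> Hs s" "length hs = k" "set hs \<subseteq> Hs s" for h hs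
      using that 2 Hs_norm_cube_remainder_1_le[OF w] by (auto simp: length_Suc_conv)
    then show ?thesis
      using K_nonneg by (intro that[of "3 * K"]) simp_all
  next
    case 3
    show ?thesis
      using cube_remainder_vanishes[OF 3 w] by (intro that[of 0]) (simp_all add: Hs_norm_fzero)
  qed
qed

theorem smooth_cube: "smooth_Hs s (\<lambda>w. T w w w)"
  unfolding smooth_Hs_def
proof (intro exI[where x=cube_deriv] conjI ballI allI impI)
  fix w assume "w \<in> Hs s"
  show "cube_deriv 0 w [] = T w w w"
    by (simp add: cube_deriv_def)
next
  fix k w assume "w \<in> Hs s"
  then show "multilin_bounded s k (cube_deriv k w)"
    by (rule multilin_bounded_cube_deriv)
next
  fix k w and \<epsilon> :: real assume w: "w \<in> Hs s" and \<epsilon>: "\<epsilon> > 0"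
  obtain C where C: "C \<ge> 0"
    and quadratic: "\<And>h hs. h \<in> Hs s \<Longrightarrow> Hs_norm s h \<le> 1 \<Longrightarrow> length hs = k \<Longrightarrow> set hs \<subseteq> Hs s \<Longrightarrow>
      Hs_norm s (cube_remainder k w h hs) \<le> C * (Hs_norm s h)^2 * prod_list (map (Hs_norm s) hs)"
    using cube_remainder_quadratic[OF w] by blast
  show "\<exists>\<delta>>0. \<forall>h\<in>Hs s. Hs_norm s h < \<delta> \<longrightarrow> (\<forall>hs. length hs = k \<and> set hs \<subseteq> Hs s \<longrightarrow>
      Hs_norm s (cube_remainder k w h hs) \<le> \<epsilon> * Hs_norm s h * prod_list (map (Hs_norm s) hs))"
  proof (intro exI[where x="min 1 (\<epsilon> / (C + 1))"] conjI ballI allI impI)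
    show "min 1 (\<epsilon> / (C + 1)) > 0"
      using C \<epsilon> by simp
    fix h hs assume h: "h \<in> Hs s" "Hs_norm s h < min 1 (\<epsilon> / (C + 1))"
      and hs: "length hs = k \<and> set hs \<subseteq> Hs s"
    have P: "prod_list (map (Hs_norm s) hs) \<ge> 0"
      by (induction hs) (simp_all add: Hs_norm_nonneg)
    have "C * Hs_norm s h \<le> \<epsilon>"
    proof -
      have "C * Hs_norm s h \<le> (C + 1) * Hs_norm s h"
        by (simp add: Hs_norm_nonneg distrib_right)
      also have "\<dots> \<le> \<epsilon>"
        using h(2) C by (simp add: pos_less_divide_eq mult.commute)
      finally show ?thesis .
    qed
    then have "C * (Hs_norm s h)^2 * prod_list (map (Hs_norm s) hs) \<le> \<epsilon> * Hs_norm s h * prod_list (map (Hs_norm s) hs)"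
      using P Hs_norm_nonneg[of s h] mult_right_mono[of "C * Hs_norm s h" \<epsilon> "Hs_norm s h * prod_list (map (Hs_norm s) hs)"]
      by (simp add: power2_eq_square mult_ac)
    then show "Hs_norm s (cube_remainder k w h hs) \<le> \<epsilon> * Hs_norm s h * prod_list (map (Hs_norm s) hs)"
      using quadratic[of h hs] h hs by simp
  qed
qed

end

lemma Hs_trilinear_Ftri:
  assumes "s > 1/2"
  shows "Hs_trilinear s (Hs_alg_const s) (Ftri t)"
  by unfold_locales
    (simp_all add: Hs_Ftri[OF assms] Ftri_fadd1[OF assms] Ftri_fadd2[OF assms] Ftri_fadd3[OF assms]
      Ftri_fscale Hs_norm_Ftri_le[OF assms] Hs_alg_const_nonneg)

section \<open>The time average\<close>

lemma has_integral_exp_int: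
  "((\<lambda>\<tau>. exp (\<i> * of_int k * of_real \<tau>)) has_integral (if k = 0 then of_real (2 * pi) else 0)) {0..2 * pi}"
proof (cases "k = 0")
  case True
  then show ?thesis
    using has_integral_const_real[of "1::complex" 0 "2 * pi"] by (simp add: scaleR_conv_of_real)
next
  case False
  define a where "a = \<i> * of_int k"
  have "a \<noteq> 0" using False by (simp add: a_def)
  have "exp (a * of_real (2 * pi)) = exp (0 + \<i> * (of_int k * (of_real pi * 2)))"
    by (simp add: a_def algebra_simps)
  then have "exp (a * of_real (2 * pi)) = 1"
    by (simp only: exp_plus_2pin) simp
  then have "integral {0..2 * pi} (\<lambda>t. exp (a * of_real t)) = 0"
    using integral_exp[of "2 * pi" a] \<open>a \<noteq> 0\<close> by simp
  moreover have "(\<lambda>t. exp (a * of_real t)) integrable_on {0..2 * pi}"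
    by (intro integrable_continuous_interval continuous_intros)
  ultimately show ?thesis
    using False by (simp add: a_def has_integral_integral mult.assoc)
qed

lemma uniform_limit_finite_sums_infsum:
  fixes e :: "'t \<Rightarrow> 'a \<Rightarrow> 'b::banach"
  assumes bound: "\<And>\<tau> p. norm (e \<tau> p) \<le> c p" and c: "c summable_on UNIV"
  shows "uniform_limit S (\<lambda>X \<tau>. sum (e \<tau>) X) (\<lambda>\<tau>. \<Sum>\<^sub>\<infinity>p. e \<tau> p) (finite_subsets_at_top UNIV)"
  unfolding uniform_limit_iff
proof (intro allI impI)
  fix \<epsilon> :: real assume "\<epsilon> > 0"
  have c_nonneg: "c p \<ge> 0" for p
    using bound[of undefined p] norm_ge_zero order_trans by blast
  have norm_summable: "(\<lambda>p. norm (e \<tau> p)) summable_on A" for \<tau> A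
    using summable_on_subset_banach[OF c subset_UNIV]
    by (rule summable_on_comparison_test) (simp_all add: bound)
  have "\<forall>\<^sub>F X in finite_subsets_at_top UNIV. dist (sum c X) (\<Sum>\<^sub>\<infinity>p. c p) < \<epsilon>"
    using tendstoD[OF c[unfolded summable_iff_has_sum_infsum has_sum_def] \<open>\<epsilon> > 0\<close>] .
  moreover have "\<forall>\<^sub>F X in finite_subsets_at_top UNIV. finite X"
    by (rule eventually_finite_subsets_at_top_weakI)
  ultimately show "\<forall>\<^sub>F X in finite_subsets_at_top UNIV. \<forall>\<tau>\<in>S. dist (sum (e \<tau>) X) (\<Sum>\<^sub>\<infinity>p. e \<tau> p) < \<epsilon>"
  proof eventually_elim
    case (elim X)
    show ?case
    proof
      fix \<tau>
      have "dist (sum (e \<tau>) X) (\<Sum>\<^sub>\<infinity>p. e \<tau> p) = norm (\<Sum>\<^sub>\<infinity>p\<in>UNIV - X. e \<tau> p)"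
        using elim abs_summable_summable[OF norm_summable]
        by (simp add: dist_norm norm_minus_commute infsum_Diff)
      also have "\<dots> \<le> (\<Sum>\<^sub>\<infinity>p\<in>UNIV - X. norm (e \<tau> p))"
        by (rule norm_infsum_bound[OF norm_summable])
      also have "\<dots> \<le> (\<Sum>\<^sub>\<infinity>p\<in>UNIV - X. c p)"
        using norm_summable summable_on_subset_banach[OF c]
        by (intro infsum_mono bound) auto
      also have "\<dots> = (\<Sum>\<^sub>\<infinity>p. c p) - sum c X"
        using elim c by (simp add: infsum_Diff)
      also have "\<dots> < \<epsilon>"
        using elim by (simp add: dist_norm)
      finally show "dist (sum (e \<tau>) X) (\<Sum>\<^sub>\<infinity>p. e \<tau> p) < \<epsilon>" .
    qed
  qed
qed

lemma integral_infsum_exp: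
  fixes c :: "'a \<Rightarrow> complex" and \<phi> :: "'a \<Rightarrow> int"
  assumes c: "(\<lambda>p. norm (c p)) summable_on UNIV"
  shows "integral {0..2 * pi} (\<lambda>\<tau>. \<Sum>\<^sub>\<infinity>p. exp (\<i> * of_int (\<phi> p) * of_real \<tau>) * c p)
       = of_real (2 * pi) * (\<Sum>\<^sub>\<infinity>p. if \<phi> p = 0 then c p else 0)"
proof -
  define e where "e \<tau> p = exp (\<i> * of_int (\<phi> p) * of_real \<tau>) * c p" for \<tau> p
  define d where "d p = (if \<phi> p = 0 then c p else 0)" for p
  define F where "F = finite_subsets_at_top (UNIV :: 'a set)"
  have "uniform_limit {0..2 * pi} (\<lambda>X \<tau>. sum (e \<tau>) X) (\<lambda>\<tau>. \<Sum>\<^sub>\<infinity>p. e \<tau> p) F"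
    unfolding F_def using c by (intro uniform_limit_finite_sums_infsum) (simp_all add: e_def norm_mult)
  moreover have "continuous_on {0..2 * pi} (\<lambda>\<tau>. sum (e \<tau>) X)" for X
    unfolding e_def by (intro continuous_intros)
  ultimately obtain I J where I: "\<And>X. ((\<lambda>\<tau>. sum (e \<tau>) X) has_integral I X) {0..2 * pi}"
    and J: "((\<lambda>\<tau>. \<Sum>\<^sub>\<infinity>p. e \<tau> p) has_integral J) {0..2 * pi}" and IJ: "(I \<longlongrightarrow> J) F"
    by (rule uniform_limit_integral) (auto simp: F_def)
  \<comment> \<open>on finite partial sums only the resonant terms survive integration\<close>
  have partial: "I X = (\<Sum>p\<in>X. of_real (2 * pi) * d p)" if "finite X" for X
  proof (rule has_integral_unique[OF I])
    show "((\<lambda>\<tau>. sum (e \<tau>) X) has_integral (\<Sum>p\<in>X. of_real (2 * pi) * d p)) {0..2 * pi}"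
      unfolding e_def
    proof (intro has_integral_sum that)
      fix p
      show "((\<lambda>\<tau>. exp (\<i> * of_int (\<phi> p) * of_real \<tau>) * c p) has_integral of_real (2 * pi) * d p) {0..2 * pi}"
        using has_integral_mult_left[OF has_integral_exp_int[of "\<phi> p"], of "c p"]
        by (cases "\<phi> p = 0") (simp_all add: d_def)
    qed
  qed
  have "(\<lambda>p. norm (d p)) summable_on UNIV"
    by (rule summable_on_comparison_test[OF c]) (simp_all add: d_def)
  then have "d summable_on UNIV"
    by (rule abs_summable_summable)
  then have "(sum (\<lambda>p. of_real (2 * pi) * d p) \<longlongrightarrow> of_real (2 * pi) * (\<Sum>\<^sub>\<infinity>p. d p)) F"
    using has_sum_cmult_right[OF has_sum_infsum] unfolding F_def has_sum_def by blast
  moreover have "\<forall>\<^sub>F X in F. I X = (\<Sum>p\<in>X. of_real (2 * pi) * d p)"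
    unfolding F_def by (intro eventually_finite_subsets_at_top_weakI partial)
  ultimately have "(I \<longlongrightarrow> of_real (2 * pi) * (\<Sum>\<^sub>\<infinity>p. d p)) F"
    by (rule tendsto_cong[THEN iffD2, rotated])
  then have "J = of_real (2 * pi) * (\<Sum>\<^sub>\<infinity>p. d p)"
    using IJ by (intro tendsto_unique[of F]) (simp_all add: F_def)
  then show ?thesis
    using J by (simp add: integral_unique e_def d_def)
qed

definition Fnl_coeff :: "int \<Rightarrow> fseq \<Rightarrow> int \<times> int \<Rightarrow> complex" where
  "Fnl_coeff n w p = w (fst p) * w (snd p) * cnj (w (fst p + snd p - n))"

definition Fnl_phase :: "int \<Rightarrow> int \<times> int \<Rightarrow> int" where
  "Fnl_phase n p = n^3 - (fst p)^3 - (snd p)^3 - (n - fst p - snd p)^3"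

lemma summable_on_norm_of_Hs:
  assumes s: "s > 1/2" and w: "w \<in> Hs s"
  shows "(\<lambda>n. cmod (w n)) summable_on UNIV"
proof -
  define a where "a n = sqrt (Hs_weight s n) * cmod (w n)" for n
  define b where "b n = 1 / sqrt (Hs_weight s n)" for n
  have "(\<lambda>n. a n * b n) summable_on UNIV"
  proof (rule Cauchy_Schwarz_infsum(1))
    show "(\<lambda>n. (a n)^2) summable_on UNIV"
      using w by (simp add: a_def Hs_def power_mult_distrib)
    show "(\<lambda>n. (b n)^2) summable_on UNIV"
      using summable_inverse_Hs_weight[OF s] by (simp add: b_def power_divide)
  qed (simp_all add: a_def b_def)
  moreover have "a n * b n = cmod (w n)" for n
    using Hs_weight_pos[of s n] by (simp add: a_def b_def)
  ultimately show ?thesis by simp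
qed

lemma correlation_bound:
  assumes "l2 w"
  shows "(\<lambda>k. cmod (w k) * cmod (w (k + j))) summable_on UNIV"
    and "(\<Sum>\<^sub>\<infinity>k. cmod (w k) * cmod (w (k + j))) \<le> H_norm2 w"
proof -
  have w2: "((\<lambda>k. (cmod (w k))^2) has_sum H_norm2 w) UNIV"
    using assms by (simp add: l2_def H_norm2_def)
  have shifted: "((\<lambda>k. (cmod (w (k + j)))^2) has_sum H_norm2 w) UNIV"
    by (rule has_sum_int_translate[OF w2])
  show "(\<lambda>k. cmod (w k) * cmod (w (k + j))) summable_on UNIV"
    using w2 shifted by (intro Cauchy_Schwarz_infsum(1)) (auto dest: has_sum_imp_summable)
  have "(\<Sum>\<^sub>\<infinity>k. cmod (w k) * cmod (w (k + j)))^2 \<le> (H_norm2 w)^2"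
    using Cauchy_Schwarz_infsum(2)[of UNIV "\<lambda>k. cmod (w k)" "\<lambda>k. cmod (w (k + j))"] w2 shifted
    by (simp add: infsumI has_sum_imp_summable power2_eq_square)
  moreover have "H_norm2 w \<ge> 0"
    unfolding H_norm2_def by (intro infsum_nonneg) simp
  ultimately show "(\<Sum>\<^sub>\<infinity>k. cmod (w k) * cmod (w (k + j))) \<le> H_norm2 w"
    by (rule power2_le_imp_le)
qed

lemma summable_on_norm_Fnl_coeff:
  assumes s: "s > 1/2" and w: "w \<in> Hs s"
  shows "(\<lambda>p. norm (Fnl_coeff n w p)) summable_on UNIV"
proof -
  have lw: "l2 w"
    using Hs_imp_l2[of s w] s w by simp
  define Q where "Q m = (\<Sum>\<^sub>\<infinity>k. cmod (w k) * cmod (w (k + (m - n))))" for m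
  have row: "((\<lambda>k. norm (Fnl_coeff n w (m, k))) has_sum cmod (w m) * Q m) UNIV" for m
  proof -
    have "((\<lambda>k. cmod (w m) * (cmod (w k) * cmod (w (k + (m - n))))) has_sum cmod (w m) * Q m) UNIV"
      unfolding Q_def by (intro has_sum_cmult_right has_sum_infsum correlation_bound(1)[OF lw])
    moreover have "norm (Fnl_coeff n w (m, k)) = cmod (w m) * (cmod (w k) * cmod (w (k + (m - n))))" for k
      by (simp add: Fnl_coeff_def norm_mult algebra_simps)
    ultimately show ?thesis by simp
  qed
  have "(\<lambda>m. cmod (w m) * Q m) summable_on UNIV"
  proof (rule summable_on_comparison_test)
    show "(\<lambda>m. cmod (w m) * H_norm2 w) summable_on UNIV"
      by (rule summable_on_cmult_left[OF summable_on_norm_of_Hs[OF s w]])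
    show "cmod (w m) * Q m \<le> cmod (w m) * H_norm2 w" for m
      unfolding Q_def by (intro mult_left_mono correlation_bound(2)[OF lw]) simp
    show "0 \<le> cmod (w m) * Q m" for m
      unfolding Q_def by (intro mult_nonneg_nonneg infsum_nonneg) simp_all
  qed
  then have "(\<lambda>p. norm (Fnl_coeff n w p)) summable_on UNIV \<times> UNIV"
    using row by (intro summable_on_SigmaI) auto
  then show ?thesis by simp
qed

lemma Fnl_summand_eq:
  "exp (- \<i> * of_int (n^3) * of_real (- t)) *
    ((exp (- \<i> * of_int (m^3) * of_real t) * w m) *
     ((exp (- \<i> * of_int (k^3) * of_real t) * w k) *
      cnj (exp (- \<i> * of_int ((- (n - m - k))^3) * of_real t) * w (- (n - m - k)))))
   = exp (\<i> * of_int (Fnl_phase n (m, k)) * of_real t) * Fnl_coeff n w (m, k)"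
proof -
  have arg: "- (n - m - k) = m + k - n"
    by simp
  have cube: "(m + k - n)^3 = - ((n - m - k)^3)"
    using power_minus_odd[of 3 "n - m - k"] by (simp only: arg) simp
  define A where "A = - \<i> * of_int (n^3) * complex_of_real (- t)"
  define B where "B = - \<i> * of_int (m^3) * complex_of_real t"
  define C where "C = - \<i> * of_int (k^3) * complex_of_real t"
  define D where "D = - \<i> * of_int ((n - m - k)^3) * complex_of_real t"
  have "cnj (exp (- \<i> * of_int ((m + k - n)^3) * of_real t)) = exp D"
    unfolding cube D_def by (simp add: exp_cnj)
  then have "exp A * ((exp B * w m) * ((exp C * w k) * cnj (exp (- \<i> * of_int ((m + k - n)^3) * of_real t) * w (m + k - n))))
      = exp (A + B + C + D) * (w m * w k * cnj (w (m + k - n)))"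
    by (simp add: exp_add mult_ac)
  also have "A + B + C + D = \<i> * of_int (Fnl_phase n (m, k)) * of_real t"
    by (simp add: A_def B_def C_def D_def Fnl_phase_def algebra_simps)
  finally show ?thesis
    unfolding arg by (simp add: A_def B_def C_def Fnl_coeff_def)
qed

lemma Fnl_eq_infsum:
  assumes s: "s > 1/2" and w: "w \<in> Hs s"
  shows "Fnl t w n = (\<Sum>\<^sub>\<infinity>p. exp (\<i> * of_int (Fnl_phase n p) * of_real t) * Fnl_coeff n w p)"
proof -
  define g where "g p = exp (\<i> * of_int (Fnl_phase n p) * of_real t) * Fnl_coeff n w p" for p
  have "(\<lambda>p. norm (g p)) summable_on UNIV"
    using summable_on_norm_Fnl_coeff[OF s w, of n] by (simp add: g_def norm_mult)
  then have g: "g summable_on UNIV"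
    by (rule abs_summable_summable)
  have "Fnl t w n = exp (- \<i> * of_int (n^3) * of_real (- t)) *
     (\<Sum>\<^sub>\<infinity>m. (exp (- \<i> * of_int (m^3) * of_real t) * w m) *
        (\<Sum>\<^sub>\<infinity>k. (exp (- \<i> * of_int (k^3) * of_real t) * w k) *
           cnj (exp (- \<i> * of_int ((- (n - m - k))^3) * of_real t) * w (- (n - m - k)))))"
    by (simp add: Fnl_def Let_def H1_def fmult_def fconj_def)
  also have "\<dots> = (\<Sum>\<^sub>\<infinity>m. \<Sum>\<^sub>\<infinity>k. g (m, k))"
    by (simp only: infsum_cmult_right'[symmetric] Fnl_summand_eq g_def)
  also have "\<dots> = (\<Sum>\<^sub>\<infinity>p. g p)"
    using infsum_Sigma'_banach[of "\<lambda>m k. g (m, k)" UNIV "\<lambda>_. UNIV"] g by simp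
  finally show ?thesis
    by (simp add: g_def)
qed

lemma Fnl_phase_eq_0_iff: "Fnl_phase n (m, k) = 0 \<longleftrightarrow> k = - m \<or> m = n \<or> k = n"
proof -
  have "Fnl_phase n (m, k) = 3 * (m + k) * (n - m) * (n - k)"
    unfolding Fnl_phase_def by (simp add: power3_eq_cube algebra_simps)
  then show ?thesis by auto
qed

lemma infsum_mult_cnj_eq_H_norm2:
  assumes "l2 w"
  shows "(\<Sum>\<^sub>\<infinity>k. w k * cnj (w k)) = of_real (H_norm2 w)"
proof -
  have "((\<lambda>k. complex_of_real ((cmod (w k))^2)) has_sum of_real (H_norm2 w)) UNIV"
    using assms unfolding l2_def H_norm2_def by (intro has_sum_of_real has_sum_infsum)
  moreover have "(\<lambda>k. complex_of_real ((cmod (w k))^2)) = (\<lambda>k. w k * cnj (w k))"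
    by (rule ext, rule complex_norm_square)
  ultimately show ?thesis
    by (simp only:) (rule infsumI)
qed

lemma infsum_pair_iterated:
  fixes g :: "int \<times> int \<Rightarrow> complex"
  assumes "g summable_on UNIV"
  shows "(\<Sum>\<^sub>\<infinity>p. g p) = (\<Sum>\<^sub>\<infinity>m. \<Sum>\<^sub>\<infinity>k. g (m, k))"
  using infsum_Sigma'_banach[of "\<lambda>m k. g (m, k)" UNIV "\<lambda>_. UNIV"] assms by simp

lemma summable_on_Fnl_coeff_restrict:
  assumes "s > 1/2" "w \<in> Hs s"
  shows "(\<lambda>p. if P p then Fnl_coeff n w p else 0) summable_on UNIV"
  by (rule summable_on_restrict_of_norm[OF summable_on_norm_Fnl_coeff[OF assms]])

lemma has_sum_Fnl_coeff_antidiagonal: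
  assumes s: "s > 1/2" and w: "w \<in> Hs s"
  shows "((\<lambda>p. if snd p = - fst p then Fnl_coeff n w p else 0) has_sum bracket w w * cnj (w (- n))) UNIV"
proof -
  have "(\<Sum>\<^sub>\<infinity>p. if snd p = - fst p then Fnl_coeff n w p else 0) = (\<Sum>\<^sub>\<infinity>m. w m * w (- m) * cnj (w (- n)))"
    using summable_on_Fnl_coeff_restrict[OF s w]
    by (simp add: infsum_pair_iterated Fnl_coeff_def infsum_delta)
  also have "\<dots> = bracket w w * cnj (w (- n))"
    by (simp add: bracket_def infsum_cmult_left')
  finally show ?thesis
    using summable_on_Fnl_coeff_restrict[OF s w] by (simp add: has_sum_iff)
qed

lemma has_sum_Fnl_coeff_fst_eq:
  assumes s: "s > 1/2" and w: "w \<in> Hs s"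
  shows "((\<lambda>p. if fst p = n then Fnl_coeff n w p else 0) has_sum w n * of_real (H_norm2 w)) UNIV"
proof -
  have "(\<Sum>\<^sub>\<infinity>k. if m = n then Fnl_coeff n w (n, k) else 0) = (if m = n then \<Sum>\<^sub>\<infinity>k. Fnl_coeff n w (n, k) else 0)" for m
    by simp
  then have "(\<Sum>\<^sub>\<infinity>p. if fst p = n then Fnl_coeff n w p else 0)
      = (\<Sum>\<^sub>\<infinity>m. if m = n then \<Sum>\<^sub>\<infinity>k. Fnl_coeff n w (m, k) else 0)"
    using summable_on_Fnl_coeff_restrict[OF s w] by (simp add: infsum_pair_iterated cong: if_cong)
  also have "\<dots> = (\<Sum>\<^sub>\<infinity>k. w n * (w k * cnj (w k)))"
    by (simp add: infsum_delta Fnl_coeff_def mult.assoc)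
  also have "\<dots> = w n * of_real (H_norm2 w)"
    using Hs_imp_l2[of s w] s w by (simp add: infsum_cmult_right' infsum_mult_cnj_eq_H_norm2)
  finally show ?thesis
    using summable_on_Fnl_coeff_restrict[OF s w] by (simp add: has_sum_iff)
qed

lemma has_sum_Fnl_coeff_snd_eq:
  assumes s: "s > 1/2" and w: "w \<in> Hs s"
  shows "((\<lambda>p. if snd p = n then Fnl_coeff n w p else 0) has_sum w n * of_real (H_norm2 w)) UNIV"
proof -
  have "(\<Sum>\<^sub>\<infinity>p. if snd p = n then Fnl_coeff n w p else 0) = (\<Sum>\<^sub>\<infinity>m. w n * (w m * cnj (w m)))"
    using summable_on_Fnl_coeff_restrict[OF s w]
    by (simp add: infsum_pair_iterated Fnl_coeff_def infsum_delta algebra_simps)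
  also have "\<dots> = w n * of_real (H_norm2 w)"
    using Hs_imp_l2[of s w] s w by (simp add: infsum_cmult_right' infsum_mult_cnj_eq_H_norm2)
  finally show ?thesis
    using summable_on_Fnl_coeff_restrict[OF s w] by (simp add: has_sum_iff)
qed

lemma has_sum_resonant_Fnl_coeff:
  assumes s: "s > 1/2" and w: "w \<in> Hs s"
  shows "((\<lambda>p. if Fnl_phase n p = 0 then Fnl_coeff n w p else 0) has_sum
      bracket w w * cnj (w (- n)) + w n * of_real (H_norm2 w) + w n * of_real (H_norm2 w)
      - Fnl_coeff n w (n, - n) - Fnl_coeff n w (- n, n) - Fnl_coeff n w (n, n)
      + (if n = 0 then Fnl_coeff n w (0, 0) else 0)) UNIV"
proof -
  define c where "c = Fnl_coeff n w"
  have origin: "((\<lambda>p. if p = (0, 0) \<and> n = 0 then c p else 0) has_sum (if n = 0 then c (0, 0) else 0)) UNIV"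
    using has_sum_delta[of "(0, 0)" c] by (cases "n = 0") simp_all
  \<comment> \<open>inclusion--exclusion over the three resonant lines k = -m, m = n and k = n\<close>
  have decompose: "(if Fnl_phase n p = 0 then c p else 0)
      = (if snd p = - fst p then c p else 0) + (if fst p = n then c p else 0) + (if snd p = n then c p else 0)
        - (if p = (n, - n) then c p else 0) - (if p = (- n, n) then c p else 0) - (if p = (n, n) then c p else 0)
        + (if p = (0, 0) \<and> n = 0 then c p else 0)" for p
  proof (cases p)
    case (Pair m k)
    have corners: "(m, k) = (n, - n) \<longleftrightarrow> k = - m \<and> m = n" "(m, k) = (- n, n) \<longleftrightarrow> k = - m \<and> k = n"
      "(m, k) = (n, n) \<longleftrightarrow> m = n \<and> k = n" "(m, k) = (0, 0) \<and> n = 0 \<longleftrightarrow> k = - m \<and> m = n \<and> k = n"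
      by auto
    show ?thesis
      unfolding Pair fst_conv snd_conv Fnl_phase_eq_0_iff corners
      by (cases "k = - m"; cases "m = n"; cases "k = n") simp_all
  qed
  have "((\<lambda>p. (if snd p = - fst p then c p else 0) + (if fst p = n then c p else 0) + (if snd p = n then c p else 0)
        - (if p = (n, - n) then c p else 0) - (if p = (- n, n) then c p else 0) - (if p = (n, n) then c p else 0)
        + (if p = (0, 0) \<and> n = 0 then c p else 0)) has_sum
      bracket w w * cnj (w (- n)) + w n * of_real (H_norm2 w) + w n * of_real (H_norm2 w)
      - c (n, - n) - c (- n, n) - c (n, n) + (if n = 0 then c (0, 0) else 0)) UNIV"
    unfolding c_def
    by (intro has_sum_add has_sum_diff has_sum_Fnl_coeff_antidiagonal[OF s w] has_sum_Fnl_coeff_fst_eq[OF s w]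
        has_sum_Fnl_coeff_snd_eq[OF s w] origin[unfolded c_def] has_sum_delta)
  then show ?thesis
    unfolding c_def[symmetric] decompose .
qed

lemma Navg_eq:
  assumes s: "s > 1/2" and w: "w \<in> Hs s"
  shows "Navg w n = 2 * w n * complex_of_real (H_norm2 w) + cnj (w (- n)) * bracket w w
    - (if n = 0 then 2 * w 0 * complex_of_real ((cmod (w 0))^2)
       else w n * complex_of_real ((cmod (w n))^2 + 2 * (cmod (w (- n)))^2))"
proof -
  have "integral {0..2 * pi} (\<lambda>\<tau>. Fnl \<tau> w n)
      = of_real (2 * pi) * (\<Sum>\<^sub>\<infinity>p. if Fnl_phase n p = 0 then Fnl_coeff n w p else 0)"
    unfolding Fnl_eq_infsum[OF s w] by (rule integral_infsum_exp[OF summable_on_norm_Fnl_coeff[OF s w]])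
  then have "Navg w n = (\<Sum>\<^sub>\<infinity>p. if Fnl_phase n p = 0 then Fnl_coeff n w p else 0)"
    by (simp add: Navg_def)
  also have "\<dots> = bracket w w * cnj (w (- n)) + w n * of_real (H_norm2 w) + w n * of_real (H_norm2 w)
      - Fnl_coeff n w (n, - n) - Fnl_coeff n w (- n, n) - Fnl_coeff n w (n, n)
      + (if n = 0 then Fnl_coeff n w (0, 0) else 0)"
    by (rule infsumI[OF has_sum_resonant_Fnl_coeff[OF s w]])
  finally show ?thesis
    unfolding of_real_add of_real_mult complex_norm_square
    by (cases "n = 0") (simp_all add: Fnl_coeff_def algebra_simps)
qed

lemma Navg_eq_alt:
  assumes s: "s > 1/2" and w: "w \<in> Hs s"
  shows "Navg w n = (if n = 0
      then 2 * w 0 * complex_of_real (H_norm2 w - (cmod (w 0))^2) + cnj (w 0) * bracket w w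
      else w n * complex_of_real (2 * H_norm2 w - (cmod (w n))^2 - 2 * (cmod (w (- n)))^2)
        + cnj (w (- n)) * bracket w w)"
  unfolding Navg_eq[OF s w] by (cases "n = 0") (simp_all add: algebra_simps)

lemma H1_add_2pi: "H1 (t + 2 * pi * of_int j) x = H1 t x"
proof (rule ext)
  fix n :: int
  have "- \<i> * of_int (n^3) * of_real (t + 2 * pi * of_int j)
      = - \<i> * of_int (n^3) * of_real t + \<i> * (of_int (- (n^3) * j) * (of_real pi * 2))"
    by (simp add: algebra_simps)
  then show "H1 (t + 2 * pi * of_int j) x n = H1 t x n"
    unfolding H1_def by (simp only: exp_plus_2pin)
qed

lemma Fnl_periodic: "Fnl (t + 2 * pi) w = Fnl t w"
  using H1_add_2pi[of t 1] H1_add_2pi[of "- t" "- 1"] by (simp add: Fnl_def)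

theorem lemma2p2:
  fixes s :: real
  assumes "s > 1/2"
  shows "\<exists>C. (\<forall>\<tau> w. w \<in> Hs s \<longrightarrow> Fnl \<tau> w \<in> Hs s \<and> Hs_norm s (Fnl \<tau> w) \<le> C * Hs_norm s w ^ 3)
      \<and> (\<forall>\<tau>. smooth_Hs s (Fnl \<tau>))
      \<and> (\<forall>\<tau> w. w \<in> Hs s \<longrightarrow> Fnl (\<tau> + 2*pi) w = Fnl \<tau> w)
      \<and> (\<forall>w \<in> Hs s.
           Navg w = (\<lambda>n. 2 * w n * complex_of_real (H_norm2 w) + cnj (w (- n)) * bracket w w
                          - (if n = 0 then 2 * w 0 * complex_of_real ((cmod (w 0))^2)
                             else w n * complex_of_real ((cmod (w n))^2 + 2 * (cmod (w (- n)))^2)))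
         \<and> Navg w = (\<lambda>n. if n = 0
                          then 2 * w 0 * complex_of_real (H_norm2 w - (cmod (w 0))^2) + cnj (w 0) * bracket w w
                          else w n * complex_of_real (2 * H_norm2 w - (cmod (w n))^2 - 2 * (cmod (w (- n)))^2)
                               + cnj (w (- n)) * bracket w w))"
proof (intro exI[where x="Hs_alg_const s"] conjI allI impI ballI)
  fix \<tau> w assume w: "w \<in> Hs s"
  show "Fnl \<tau> w \<in> Hs s"
    unfolding Fnl_eq_Ftri by (rule Hs_Ftri[OF assms w w w])
  show "Hs_norm s (Fnl \<tau> w) \<le> Hs_alg_const s * Hs_norm s w ^ 3"
    using Hs_norm_Ftri_le[OF assms w w w, of \<tau>] by (simp add: Fnl_eq_Ftri power3_eq_cube)
next
  fix \<tau>
  have "Fnl \<tau> = (\<lambda>w. Ftri \<tau> w w w)"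
    by (simp add: Fnl_eq_Ftri fun_eq_iff)
  then show "smooth_Hs s (Fnl \<tau>)"
    using Hs_trilinear.smooth_cube[OF Hs_trilinear_Ftri[OF assms]] by simp
next
  fix \<tau> w
  show "Fnl (\<tau> + 2 * pi) w = Fnl \<tau> w"
    by (rule Fnl_periodic)
next
  fix w assume w: "w \<in> Hs s"
  show "Navg w = (\<lambda>n. 2 * w n * complex_of_real (H_norm2 w) + cnj (w (- n)) * bracket w w
      - (if n = 0 then 2 * w 0 * complex_of_real ((cmod (w 0))^2)
         else w n * complex_of_real ((cmod (w n))^2 + 2 * (cmod (w (- n)))^2)))"
    using Navg_eq[OF assms w] by (simp add: fun_eq_iff)
  show "Navg w = (\<lambda>n. if n = 0
      then 2 * w 0 * complex_of_real (H_norm2 w - (cmod (w 0))^2) + cnj (w 0) * bracket w w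
      else w n * complex_of_real (2 * H_norm2 w - (cmod (w n))^2 - 2 * (cmod (w (- n)))^2)
        + cnj (w (- n)) * bracket w w)"
    using Navg_eq_alt[OF assms w] by (simp add: fun_eq_iff)
qed

end
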